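(* Let $\mathbb{K}$ be a topological field, $F$ a topological $\mathbb{K}$-vector space, $d\in\mathbb{N}$, $k\in\mathbb{N}_0\cup\{\infty\}$, and $U\subseteq\mathbb{K}^d$ open or of the form $U_1\times\cdots\times U_d$ with $U_i\subseteq\mathbb{K}$ having dense interior. For each $\alpha\in\mathbb{N}_0^d$ with $j:=|\alpha|\le k$, there exists an affine-linear map $\theta_\alpha\colon(\mathbb{K}^d)^{<\alpha>}\to(\mathbb{K}^d)^{[j]}$ such that $\theta_\alpha(U^{<\alpha>})\subseteq U^{[j]}$ and $f^{<\alpha>}=f^{[j]}\circ\theta_\alpha|_{U^{<\alpha>}}$ for each $C^k$-map $f\colon U\to F$.
   Context: Topological fields Hausdorff, non-discrete; vector spaces Hausdorff. For a subset $V$ of a $\mathbb{K}$-vector space $E$: $V^{[1]}=\{(x,y,t)\in V\times E\times\mathbb{K}:x+ty\in V\}$, $V^{[j]}=(V^{[1]})^{[j-1]}$, $V^{[0]}=V$; in particular $(\mathbb{K}^d)^{[1]}=\mathbb{K}^d\times\mathbb{K}^d\times\mathbb{K}$ and $(\mathbb{K}^d)^{[j]}$ is a finite-dimensional $\mathbb{K}$-vector space. For $g$ on $V$ (dense interior), $g$ is $C^1_{BGN}$ if continuous and $(x,y,t)\mapsto(g(x+ty)-g(x))/t$ ($t\ne0$) extends continuously to $g^{[1]}$ on $V^{[1]}$; $C^k_{BGN}$ if $C^1_{BGN}$ and $g^{[1]}$ is $C^{k-1}_{BGN}$; $g^{[j]}=(g^{[1]})^{[j-1]}$, $g^{[0]}=g$.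 For $\alpha\in\mathbb{N}_0^d$, $(\mathbb{K}^d)^{<\alpha>}=\mathbb{K}^{d+|\alpha|}$, elements written $(x^{(1)},\ldots,x^{(d)})$ with $x^{(i)}=(x^{(i)}_0,\ldots,x^{(i)}_{\alpha_i})$; $U^{<\alpha>}$: all such $x$ with $(x^{(1)}_{i_1},\ldots,x^{(d)}_{i_d})\in U$ for all $0\le i_\ell\le\alpha_\ell$; $U^{>\alpha<}$: those with pairwise distinct entries in each block; $f^{>\alpha<}(x)=\sum_{j_1,\ldots,j_d}\big(\prod_\ell\prod_{k_\ell\ne j_\ell}(x^{(\ell)}_{j_\ell}-x^{(\ell)}_{k_\ell})^{-1}\big)f(x^{(1)}_{j_1},\ldots,x^{(d)}_{j_d})$, and $f^{<\alpha>}$ its continuous extension to $U^{<\alpha>}$ (with $f^{<0>}=f$). A $C^k$-map $f\colon U\to F$ is a $C^k_{BGN}$-map; such maps are known to be exactly the maps for which all $f^{<\alpha>}$, $|\alpha|\le k$, exist (the $C^k_{SDS}$-maps). *)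

theory Defs
  imports "HOL-Analysis.Analysis" "HOL-Library.Extended_Nat"
begin

text \<open>A Hausdorff, non-discrete topological field (the type class supplies Hausdorffness).\<close>
definition topological_field :: "'k::{field,t2_space} itself \<Rightarrow> bool" where
  "topological_field _ \<longleftrightarrow>
     continuous_on UNIV (\<lambda>p::'k\<times>'k. fst p + snd p) \<and>
     continuous_on UNIV (\<lambda>p::'k\<times>'k. fst p * snd p) \<and>
     continuous_on UNIV (\<lambda>x::'k. - x) \<and>
     continuous_on (UNIV - {0}) (\<lambda>x::'k. inverse x) \<and>
     \<not> open {0::'k}"

definition topological_vector_space ::
    "('k::{field,t2_space} \<Rightarrow> 'f::{ab_group_add,t2_space} \<Rightarrow> 'f) \<Rightarrow> bool" where
  "topological_vector_space smul \<longleftrightarrow>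
     vector_space smul \<and>
     continuous_on UNIV (\<lambda>p::'f\<times>'f. fst p + snd p) \<and>
     continuous_on UNIV (\<lambda>p::'k\<times>'f. smul (fst p) (snd p))"

section \<open>The topology on K^n, realised on lists (K^n = lists of length n)\<close>

text \<open>Product topology on each K^n; the lists of different lengths form a disjoint union.\<close>
definition lopen :: "'a::topological_space list set \<Rightarrow> bool" where
  "lopen S \<longleftrightarrow> (\<forall>x\<in>S. \<exists>A. (\<forall>i<length x. open (A i) \<and> x!i \<in> A i) \<and>
       {y. length y = length x \<and> (\<forall>i<length x. y!i \<in> A i)} \<subseteq> S)"

lemma istopology_lopen: "istopology lopen"
  unfolding istopology_def
proof (intro conjI allI impI ballI)
  fix S T :: "'a list set" assume "lopen S" "lopen T"
  show "lopen (S \<inter> T)" unfolding lopen_def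
  proof
    fix x assume x: "x \<in> S \<inter> T"
    obtain A where A: "\<forall>i<length x. open (A i) \<and> x!i \<in> A i"
      "{y. length y = length x \<and> (\<forall>i<length x. y!i \<in> A i)} \<subseteq> S"
      using \<open>lopen S\<close> x unfolding lopen_def by blast
    obtain B where B: "\<forall>i<length x. open (B i) \<and> x!i \<in> B i"
      "{y. length y = length x \<and> (\<forall>i<length x. y!i \<in> B i)} \<subseteq> T"
      using \<open>lopen T\<close> x unfolding lopen_def by blast
    show "\<exists>C. (\<forall>i<length x. open (C i) \<and> x!i \<in> C i) \<and>
       {y. length y = length x \<and> (\<forall>i<length x. y!i \<in> C i)} \<subseteq> S \<inter> T"
      by (rule exI[of _ "\<lambda>i. A i \<inter> B i"]) (use A B in auto)
  qed
next
  fix K :: "'a list set set" assume "\<forall>S\<in>K. lopen S"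
  then show "lopen (\<Union>K)" unfolding lopen_def by (meson Union_iff subset_iff)
qed

definition ltop :: "'a::topological_space list topology" where
  "ltop = topology lopen"

definition dense_interior :: "'a::topological_space list set \<Rightarrow> bool" where
  "dense_interior V \<longleftrightarrow> V \<subseteq> ltop closure_of (ltop interior_of V)"

definition lcont :: "'a::topological_space list set \<Rightarrow> ('a list \<Rightarrow> 'f::topological_space) \<Rightarrow> bool" where
  "lcont V g \<longleftrightarrow> continuous_map (subtopology ltop V) euclidean g"

definition ladd :: "'k::field list \<Rightarrow> 'k \<Rightarrow> 'k list \<Rightarrow> 'k list" where
  "ladd x t y = map2 (\<lambda>a b. a + t * b) x y"

text \<open>V^[1], with (x,y,t) encoded as the list x @ y @ [t]\<close>
definition br1 :: "'k::field list set \<Rightarrow> 'k list set" where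
  "br1 V = {x @ y @ [t] | x y t. x \<in> V \<and> length y = length x \<and> ladd x t y \<in> V}"

fun brj :: "nat \<Rightarrow> 'k::field list set \<Rightarrow> 'k list set" where
  "brj 0 V = V"
| "brj (Suc j) V = brj j (br1 V)"

definition bx :: "'k list \<Rightarrow> 'k list" where "bx z = take ((length z - 1) div 2) z"
definition by' :: "'k list \<Rightarrow> 'k list" where
  "by' z = take ((length z - 1) div 2) (drop ((length z - 1) div 2) z)"
definition bt :: "'k list \<Rightarrow> 'k" where "bt z = last z"

definition diffquot :: "('k::field \<Rightarrow> 'f::ab_group_add \<Rightarrow> 'f) \<Rightarrow> ('k list \<Rightarrow> 'f) \<Rightarrow> 'k list \<Rightarrow> 'f" where
  "diffquot smul g z = smul (inverse (bt z)) (g (ladd (bx z) (bt z) (by' z)) - g (bx z))"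

definition C1_ext :: "('k::{field,t2_space} \<Rightarrow> 'f::{ab_group_add,t2_space} \<Rightarrow> 'f) \<Rightarrow>
     'k list set \<Rightarrow> ('k list \<Rightarrow> 'f) \<Rightarrow> ('k list \<Rightarrow> 'f) \<Rightarrow> bool" where
  "C1_ext smul V g h \<longleftrightarrow> lcont (br1 V) h \<and> (\<forall>z\<in>br1 V. bt z \<noteq> 0 \<longrightarrow> h z = diffquot smul g z)"

text \<open>g^[1]: the continuous extension of the difference quotient\<close>
definition d1 :: "('k::{field,t2_space} \<Rightarrow> 'f::{ab_group_add,t2_space} \<Rightarrow> 'f) \<Rightarrow>
     'k list set \<Rightarrow> ('k list \<Rightarrow> 'f) \<Rightarrow> 'k list \<Rightarrow> 'f" where
  "d1 smul V g = (SOME h. C1_ext smul V g h)"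

definition C1 :: "('k::{field,t2_space} \<Rightarrow> 'f::{ab_group_add,t2_space} \<Rightarrow> 'f) \<Rightarrow>
     'k list set \<Rightarrow> ('k list \<Rightarrow> 'f) \<Rightarrow> bool" where
  "C1 smul V g \<longleftrightarrow> dense_interior V \<and> lcont V g \<and> (\<exists>h. C1_ext smul V g h)"

fun Ck :: "('k::{field,t2_space} \<Rightarrow> 'f::{ab_group_add,t2_space} \<Rightarrow> 'f) \<Rightarrow>
     nat \<Rightarrow> 'k list set \<Rightarrow> ('k list \<Rightarrow> 'f) \<Rightarrow> bool" where
  "Ck smul 0 V g \<longleftrightarrow> dense_interior V \<and> lcont V g"
| "Ck smul (Suc k) V g \<longleftrightarrow> C1 smul V g \<and> Ck smul k (br1 V) (d1 smul V g)"

definition Ck_enat :: "('k::{field,t2_space} \<Rightarrow> 'f::{ab_group_add,t2_space} \<Rightarrow> 'f) \<Rightarrow>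
     enat \<Rightarrow> 'k list set \<Rightarrow> ('k list \<Rightarrow> 'f) \<Rightarrow> bool" where
  "Ck_enat smul k V g \<longleftrightarrow> (case k of enat n \<Rightarrow> Ck smul n V g | \<infinity> \<Rightarrow> (\<forall>n. Ck smul n V g))"

fun dj :: "('k::{field,t2_space} \<Rightarrow> 'f::{ab_group_add,t2_space} \<Rightarrow> 'f) \<Rightarrow>
     nat \<Rightarrow> 'k list set \<Rightarrow> ('k list \<Rightarrow> 'f) \<Rightarrow> 'k list \<Rightarrow> 'f" where
  "dj smul 0 V g = g"
| "dj smul (Suc j) V g = dj smul j (br1 V) (d1 smul V g)"

fun brdim :: "nat \<Rightarrow> nat \<Rightarrow> nat" where
  "brdim d 0 = d"
| "brdim d (Suc j) = brdim (2 * d + 1) j"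

text \<open>A multi-index alpha in N_0^d is a list of length d. An element of (K^d)^<alpha> is a list of
  length d + |alpha|, consisting of consecutive blocks x^(l) of lengths alpha_l + 1.\<close>
definition blk :: "nat list \<Rightarrow> 'k list \<Rightarrow> nat \<Rightarrow> nat \<Rightarrow> 'k" where
  "blk \<alpha> x l m = x ! (sum_list (map Suc (take l \<alpha>)) + m)"

definition midx :: "nat list \<Rightarrow> nat list set" where
  "midx \<alpha> = {\<iota>. length \<iota> = length \<alpha> \<and> (\<forall>l<length \<alpha>. \<iota>!l \<le> \<alpha>!l)}"

definition pt :: "nat list \<Rightarrow> 'k list \<Rightarrow> nat list \<Rightarrow> 'k list" where
  "pt \<alpha> x \<iota> = map (\<lambda>l. blk \<alpha> x l (\<iota>!l)) [0..<length \<alpha>]"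

definition Uang :: "'k list set \<Rightarrow> nat list \<Rightarrow> 'k list set" where
  "Uang U \<alpha> = {x. length x = length \<alpha> + sum_list \<alpha> \<and> (\<forall>\<iota>\<in>midx \<alpha>. pt \<alpha> x \<iota> \<in> U)}"

definition Urev :: "'k list set \<Rightarrow> nat list \<Rightarrow> 'k list set" where
  "Urev U \<alpha> = {x \<in> Uang U \<alpha>. \<forall>l<length \<alpha>. \<forall>m\<le>\<alpha>!l. \<forall>m'\<le>\<alpha>!l.
       m \<noteq> m' \<longrightarrow> blk \<alpha> x l m \<noteq> blk \<alpha> x l m'}"

definition frev :: "('k::field \<Rightarrow> 'f::ab_group_add \<Rightarrow> 'f) \<Rightarrow> nat list \<Rightarrow> ('k list \<Rightarrow> 'f) \<Rightarrow> 'k list \<Rightarrow> 'f" where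
  "frev smul \<alpha> f x = (\<Sum>\<iota>\<in>midx \<alpha>.
      smul (\<Prod>l<length \<alpha>. \<Prod>m\<in>{0..\<alpha>!l} - {\<iota>!l}. inverse (blk \<alpha> x l (\<iota>!l) - blk \<alpha> x l m))
           (f (pt \<alpha> x \<iota>)))"

text \<open>f^<alpha>: the continuous extension of f^>alpha< to U^<alpha>\<close>
definition fang :: "('k::{field,t2_space} \<Rightarrow> 'f::{ab_group_add,t2_space} \<Rightarrow> 'f) \<Rightarrow>
     'k list set \<Rightarrow> nat list \<Rightarrow> ('k list \<Rightarrow> 'f) \<Rightarrow> 'k list \<Rightarrow> 'f" where
  "fang smul U \<alpha> f = (SOME h. lcont (Uang U \<alpha>) h \<and> (\<forall>x\<in>Urev U \<alpha>. h x = frev smul \<alpha> f x))"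

definition affine_lmap :: "nat \<Rightarrow> nat \<Rightarrow> ('k::field list \<Rightarrow> 'k list) \<Rightarrow> bool" where
  "affine_lmap n N \<theta> \<longleftrightarrow> (\<exists>A b. \<forall>x. length x = n \<longrightarrow>
      \<theta> x = map (\<lambda>i. b i + (\<Sum>m<n. A i m * x!m)) [0..<N])"

end

theory Submission
  imports Defs
begin

text \<open>
  Let \<open>|\<alpha>| = j\<close>. For \<open>j = 0\<close> take \<open>\<theta>\<^sub>\<alpha>\<close> the identity. Otherwise lower an entry
  \<open>\<alpha>\<^sub>l = n + 1\<close> of \<open>\<alpha>\<close> by one, obtaining \<open>\<alpha>'\<close>. At a point \<open>x\<close> of \<open>U^>\<alpha><\<close> the divided
  differences satisfy the recursion
  \<open>f^>\<alpha><(x) = (f^>\<alpha>'<(x without x^(l)_n) - f^>\<alpha>'<(x without x^(l)_(n+1))) / t\<close>,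
  where \<open>t = x^(l)_(n+1) - x^(l)_n\<close>. As \<open>\<theta>\<^sub>\<alpha>\<^sub>'\<close> is affine, it maps the two reduced points
  to \<open>z + t w\<close> and \<open>z\<close> for a direction \<open>w\<close> independent of \<open>x\<close>, so with
  \<open>\<theta>\<^sub>\<alpha>(x) = (z, w, t)\<close> the recursion reads
  \<open>f^>\<alpha><(x) = (f^[j-1](z + t w) - f^[j-1](z)) / t = f^[j](\<theta>\<^sub>\<alpha>(x))\<close>.
  Nonempty open subsets of a non-discrete Hausdorff field are infinite, hence \<open>U^>\<alpha><\<close> is
  dense in \<open>U^<\<alpha>>\<close> under either hypothesis on \<open>U\<close>; so the continuous maps \<open>f^<\<alpha>>\<close> and
  \<open>f^[j] \<circ> \<theta>\<^sub>\<alpha>\<close>, which agree on \<open>U^>\<alpha><\<close>, agree on all of \<open>U^<\<alpha>>\<close>.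
\<close>

lemma brj_Suc: "brj (Suc j) V = br1 (brj j V)"
  by (induction j arbitrary: V) auto

lemma dj_Suc: "dj smul (Suc j) V g = d1 smul (brj j V) (dj smul j V g)"
  by (induction j arbitrary: V g) auto

lemma brdim_Suc: "brdim d (Suc j) = 2 * brdim d j + 1"
proof (induction j arbitrary: d)
  case (Suc j)
  then show ?case by (metis brdim.simps(2))
qed simp

lemma Ck_Suc_imp_Ck: "Ck smul (Suc n) V g \<Longrightarrow> Ck smul n V g"
  by (induction n arbitrary: V g) (auto simp: C1_def)

lemma Ck_le_imp_Ck: "m \<le> n \<Longrightarrow> Ck smul n V g \<Longrightarrow> Ck smul m V g"
proof (induction n)
  case (Suc n)
  then show ?case using Ck_Suc_imp_Ck by (metis le_Suc_eq)
qed simp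

lemma Ck_dj: "Ck smul (m + n) V g \<Longrightarrow> Ck smul n (brj m V) (dj smul m V g)"
  by (induction m arbitrary: V g) auto

lemma Ck_imp_lcont: "Ck smul n V g \<Longrightarrow> lcont V g"
  by (cases n) (auto simp: C1_def)

lemma Ck_enat_imp_Ck: "Ck_enat smul k V g \<Longrightarrow> enat n \<le> k \<Longrightarrow> Ck smul n V g"
  by (cases k) (auto simp: Ck_enat_def intro: Ck_le_imp_Ck)

lemma d1_eq_diffquot:
  assumes "C1 smul V g" "z \<in> br1 V" "bt z \<noteq> 0"
  shows "d1 smul V g z = diffquot smul g z"
proof -
  from assms(1) obtain h where "C1_ext smul V g h" by (auto simp: C1_def)
  then have "C1_ext smul V g (d1 smul V g)" unfolding d1_def by (rule someI[of "C1_ext smul V g"])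
  then show ?thesis using assms by (auto simp: C1_ext_def)
qed

lemma dj_Suc_eq_diffquot:
  assumes "Ck smul (Suc j) V g" "z \<in> brj (Suc j) V" "bt z \<noteq> 0"
  shows "dj smul (Suc j) V g z = diffquot smul (dj smul j V g) z"
proof -
  have "C1 smul (brj j V) (dj smul j V g)"
    using Ck_dj[of smul j 1 V g] assms(1) by simp
  then show ?thesis
    unfolding dj_Suc using d1_eq_diffquot assms(2,3) brj_Suc by metis
qed

lemma bt_append: "bt (x @ y @ [t]) = t"
  by (simp add: bt_def)

lemma diffquot_append:
  "length y = length x \<Longrightarrow> diffquot smul g (x @ y @ [t]) = smul (inverse t) (g (ladd x t y) - g x)"
  by (simp add: diffquot_def bx_def by'_def bt_def)

lemma append_in_br1: "x \<in> V \<Longrightarrow> length y = length x \<Longrightarrow> ladd x t y \<in> V \<Longrightarrow> x @ y @ [t] \<in> br1 V"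
  by (auto simp: br1_def)

section \<open>Divided differences on a grid of nodes\<close>

definition divdiff_weight :: "nat \<Rightarrow> (nat \<Rightarrow> 'k::field) \<Rightarrow> nat \<Rightarrow> 'k" where
  "divdiff_weight n Y i = (\<Prod>m\<in>{0..n}-{i}. inverse (Y i - Y m))"

definition divdiff_coeff :: "nat list \<Rightarrow> (nat \<Rightarrow> nat \<Rightarrow> 'k::field) \<Rightarrow> nat list \<Rightarrow> 'k" where
  "divdiff_coeff \<alpha> X \<iota> = (\<Prod>l<length \<alpha>. divdiff_weight (\<alpha>!l) (X l) (\<iota>!l))"

definition divdiff ::
    "('k::field \<Rightarrow> 'f::ab_group_add \<Rightarrow> 'f) \<Rightarrow> nat list \<Rightarrow> (nat \<Rightarrow> nat \<Rightarrow> 'k) \<Rightarrow> ('k list \<Rightarrow> 'f) \<Rightarrow> 'f" where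
  "divdiff smul \<alpha> X f =
     (\<Sum>\<iota>\<in>midx \<alpha>. smul (divdiff_coeff \<alpha> X \<iota>) (f (map (\<lambda>l. X l (\<iota>!l)) [0..<length \<alpha>])))"

lemma frev_eq_divdiff: "frev smul \<alpha> f x = divdiff smul \<alpha> (blk \<alpha> x) f"
  unfolding frev_def divdiff_def divdiff_coeff_def divdiff_weight_def pt_def by simp

lemma finite_midx: "finite (midx \<alpha>)"
proof (rule finite_subset)
  show "midx \<alpha> \<subseteq> {\<iota>. set \<iota> \<subseteq> {..sum_list \<alpha>} \<and> length \<iota> = length \<alpha>}"
  proof
    fix \<iota> assume \<iota>: "\<iota> \<in> midx \<alpha>"
    have "v \<le> sum_list \<alpha>" if "v \<in> set \<iota>" for v
    proof -
      obtain l where l: "l < length \<iota>" "v = \<iota>!l" using \<open>v \<in> set \<iota>\<close> by (auto simp: in_set_conv_nth)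
      then have "\<iota>!l \<le> \<alpha>!l" "\<alpha>!l \<le> sum_list \<alpha>"
        using \<iota> elem_le_sum_list[of l \<alpha>] by (auto simp: midx_def)
      then show ?thesis using l by simp
    qed
    then show "\<iota> \<in> {\<iota>. set \<iota> \<subseteq> {..sum_list \<alpha>} \<and> length \<iota> = length \<alpha>}"
      using \<iota> by (auto simp: midx_def)
  qed
qed (rule finite_lists_length_eq, simp)

lemma length_midx: "\<iota> \<in> midx \<alpha> \<Longrightarrow> length \<iota> = length \<alpha>"
  by (simp add: midx_def)

lemma midx_update: "\<iota> \<in> midx \<alpha> \<Longrightarrow> m \<le> \<alpha>!l \<Longrightarrow> \<iota>[l := m] \<in> midx \<alpha>"
  by (cases "l < length \<iota>") (auto simp: midx_def nth_list_update)

lemma divdiff_weight_cong: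
  "(\<And>m. m \<le> n \<Longrightarrow> Y m = Z m) \<Longrightarrow> i \<le> n \<Longrightarrow> divdiff_weight n Y i = divdiff_weight n Z i"
  unfolding divdiff_weight_def by (intro prod.cong) auto

lemma divdiff_weight_Suc:
  assumes "i \<le> n"
  shows "divdiff_weight (Suc n) Y i = inverse (Y i - Y (Suc n)) * divdiff_weight n Y i"
proof -
  have "{0..Suc n} - {i} = insert (Suc n) ({0..n} - {i})" using assms by auto
  then show ?thesis unfolding divdiff_weight_def by simp
qed

lemma divdiff_weight_last: "divdiff_weight n Y n = (\<Prod>m<n. inverse (Y n - Y m))"
proof -
  have "{0..n} - {n} = {..<n}" by auto
  then show ?thesis unfolding divdiff_weight_def by simp
qed

lemma inverse_mult_inverse_diff:
  fixes a b c :: "'k::field"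
  assumes "a \<noteq> b" "a \<noteq> c" "b \<noteq> c"
  shows "inverse (a - b) * inverse (a - c) = inverse (b - c) * (inverse (a - b) - inverse (a - c))"
  using assms by (simp add: field_simps)

text \<open>The recursion
  \<open>[y_0, ..., y_(n+1)] = ([y_0, ..., y_(n-1), y_(n+1)] - [y_0, ..., y_n]) / (y_(n+1) - y_n)\<close>,
  weight by weight; the nodes of the first divided difference on the right are
  \<open>y(n := y (Suc n))\<close>.\<close>

lemma divdiff_weight_recursion:
  fixes y :: "nat \<Rightarrow> 'k::field"
  assumes inj: "inj_on y {..Suc n}" and i: "i \<le> Suc n"
  defines "y' \<equiv> y(n := y (Suc n))"
  shows "divdiff_weight (Suc n) y i = inverse (y (Suc n) - y n) *
     ((if i = Suc n then divdiff_weight n y' n else if i = n then 0 else divdiff_weight n y' i) -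
      (if i = Suc n then 0 else divdiff_weight n y i))"
proof -
  have y_ne: "y a \<noteq> y b" if "a \<le> Suc n" "b \<le> Suc n" "a \<noteq> b" for a b
    using inj that by (auto simp: inj_on_def)
  consider "i = Suc n" | "i = n" | "i < n" using i by linarith
  then show ?thesis
  proof cases
    case 1
    have "(\<Prod>m<n. inverse (y (Suc n) - y m)) = divdiff_weight n y' n"
      unfolding divdiff_weight_last y'_def by (intro prod.cong) auto
    then show ?thesis using 1 by (simp add: divdiff_weight_last)
  next
    case 2
    have "inverse (y n - y (Suc n)) = - inverse (y (Suc n) - y n)"
      by (metis inverse_minus_eq minus_diff_eq)
    then show ?thesis using 2 divdiff_weight_Suc[of n n y] by simp
  next
    case 3
    then obtain n' where n: "n = Suc n'" by (cases n) auto
    have i': "i \<le> n'" using 3 n by simp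
    have "divdiff_weight n' y' i = divdiff_weight n' y i"
      using i' n by (intro divdiff_weight_cong) (auto simp: y'_def)
    then have y': "divdiff_weight n y' i = inverse (y i - y (Suc n)) * divdiff_weight n' y i"
      using divdiff_weight_Suc[of i n' y'] 3 i' n by (simp add: y'_def)
    have y: "divdiff_weight n y i = inverse (y i - y n) * divdiff_weight n' y i"
      using divdiff_weight_Suc[of i n' y] i' n by simp
    have inv: "inverse (y i - y (Suc n)) * inverse (y i - y n)
        = inverse (y (Suc n) - y n) * (inverse (y i - y (Suc n)) - inverse (y i - y n))"
      by (rule inverse_mult_inverse_diff) (use y_ne 3 in auto)
    have "divdiff_weight (Suc n) y i
        = inverse (y i - y (Suc n)) * inverse (y i - y n) * divdiff_weight n' y i"
      using divdiff_weight_Suc[of i n y] y 3 by (simp add: mult.assoc)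
    also have "\<dots> = inverse (y (Suc n) - y n) * (divdiff_weight n y' i - divdiff_weight n y i)"
      unfolding inv y y' by (simp add: algebra_simps)
    finally show ?thesis using 3 by simp
  qed
qed

lemma divdiff_coeff_split:
  assumes "l < length \<beta>"
  shows "divdiff_coeff \<beta> Y \<iota> = divdiff_weight (\<beta>!l) (Y l) (\<iota>!l) *
    (\<Prod>l'\<in>{..<length \<beta>}-{l}. divdiff_weight (\<beta>!l') (Y l') (\<iota>!l'))"
  unfolding divdiff_coeff_def using assms by (subst prod.remove[of _ l]) auto

lemma divdiff_cong:
  assumes "\<And>l m. l < length \<alpha> \<Longrightarrow> m \<le> \<alpha>!l \<Longrightarrow> X l m = Y l m"
  shows "divdiff smul \<alpha> X f = divdiff smul \<alpha> Y f"
  unfolding divdiff_def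
proof (intro sum.cong refl)
  fix \<iota> assume "\<iota> \<in> midx \<alpha>"
  then have \<iota>: "\<And>l. l < length \<alpha> \<Longrightarrow> \<iota>!l \<le> \<alpha>!l" by (simp add: midx_def)
  have coeff: "divdiff_coeff \<alpha> X \<iota> = divdiff_coeff \<alpha> Y \<iota>"
    unfolding divdiff_coeff_def by (intro prod.cong refl divdiff_weight_cong) (auto simp: assms \<iota>)
  have nodes: "map (\<lambda>l. X l (\<iota>!l)) [0..<length \<alpha>] = map (\<lambda>l. Y l (\<iota>!l)) [0..<length \<alpha>]"
    by (intro map_cong refl) (auto simp: assms \<iota>)
  show "smul (divdiff_coeff \<alpha> X \<iota>) (f (map (\<lambda>l. X l (\<iota>!l)) [0..<length \<alpha>])) =
      smul (divdiff_coeff \<alpha> Y \<iota>) (f (map (\<lambda>l. Y l (\<iota>!l)) [0..<length \<alpha>]))"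
    by (simp only: coeff nodes)
qed

locale multiindex_decrement =
  fixes \<alpha> :: "nat list" and l0 n :: nat
  assumes l0: "l0 < length \<alpha>" and \<alpha>_l0: "\<alpha>!l0 = Suc n"
begin

definition \<alpha>' :: "nat list" where "\<alpha>' = \<alpha>[l0 := n]"

lemma length_\<alpha>' [simp]: "length \<alpha>' = length \<alpha>"
  by (simp add: \<alpha>'_def)

lemma sum_list_\<alpha>': "Suc (sum_list \<alpha>') = sum_list \<alpha>"
proof -
  have "Suc n \<le> sum_list \<alpha>" using elem_le_sum_list[OF l0] \<alpha>_l0 by simp
  then show ?thesis using l0 \<alpha>_l0 by (simp add: \<alpha>'_def sum_list_update)
qed

lemma \<alpha>'_l0 [simp]: "\<alpha>'!l0 = n"
  using l0 by (simp add: \<alpha>'_def)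

lemma \<alpha>'_nth: "l \<noteq> l0 \<Longrightarrow> \<alpha>'!l = \<alpha>!l"
  by (simp add: \<alpha>'_def)

lemma \<alpha>'_le: "l < length \<alpha> \<Longrightarrow> m \<le> \<alpha>'!l \<Longrightarrow> m \<le> \<alpha>!l"
  by (cases "l = l0") (auto simp: \<alpha>'_nth \<alpha>_l0)

lemma midx_le_top: "\<iota> \<in> midx \<alpha> \<Longrightarrow> \<iota>!l0 \<le> Suc n"
  using l0 \<alpha>_l0 unfolding midx_def by fastforce

lemma midx_\<alpha>'_iff: "\<iota> \<in> midx \<alpha>' \<longleftrightarrow> \<iota> \<in> midx \<alpha> \<and> \<iota>!l0 \<le> n"
proof -
  have "\<iota>!l \<le> \<alpha>'!l \<longleftrightarrow> \<iota>!l \<le> \<alpha>!l \<and> (l = l0 \<longrightarrow> \<iota>!l \<le> n)" for l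
    using \<alpha>_l0 by (cases "l = l0") (auto simp: \<alpha>'_nth)
  then show ?thesis unfolding midx_def using l0 by auto
qed

lemma midx_\<alpha>'_eq: "midx \<alpha>' = midx \<alpha> - {\<iota>. \<iota>!l0 = Suc n}"
proof -
  have "\<iota>!l0 \<le> n \<longleftrightarrow> \<iota>!l0 \<noteq> Suc n" if "\<iota> \<in> midx \<alpha>" for \<iota>
    using midx_le_top[OF that] by linarith
  then show ?thesis by (auto simp: midx_\<alpha>'_iff)
qed

lemma sum_midx_drop_top:
  assumes "\<And>\<iota>. \<iota> \<in> midx \<alpha> \<Longrightarrow> \<iota>!l0 = Suc n \<Longrightarrow> g \<iota> = 0"
  shows "sum g (midx \<alpha>) = sum g (midx \<alpha>')"
  by (rule sum.mono_neutral_right[OF finite_midx]) (auto simp: midx_\<alpha>'_eq assms)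

lemma sum_midx_shift_top:
  "(\<Sum>\<iota>\<in>midx \<alpha>. if \<iota>!l0 = n then 0 else if \<iota>!l0 = Suc n then h (\<iota>[l0 := n]) else h \<iota>)
   = sum h (midx \<alpha>')"
  (is "sum ?F _ = _")
proof -
  define T where "T = {\<iota>. \<iota>!l0 = Suc n}"
  define M where "M = {\<iota>. \<iota>!l0 = n}"
  have split: "sum ?F (midx \<alpha>) = sum ?F (midx \<alpha> \<inter> T) + sum ?F (midx \<alpha>')"
    unfolding midx_\<alpha>'_eq T_def by (rule sum.Int_Diff[OF finite_midx])
  have top: "sum ?F (midx \<alpha> \<inter> T) = sum h (midx \<alpha>' \<inter> M)"
  proof (rule sum.reindex_bij_witness[of _ "\<lambda>\<iota>. \<iota>[l0 := Suc n]" "\<lambda>\<iota>. \<iota>[l0 := n]"])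
    fix \<iota> assume \<iota>: "\<iota> \<in> midx \<alpha> \<inter> T"
    then have "l0 < length \<iota>" using l0 length_midx by auto
    with \<iota> show "(\<iota>[l0 := n])[l0 := Suc n] = \<iota>" "\<iota>[l0 := n] \<in> midx \<alpha>' \<inter> M"
      by (auto simp: T_def M_def midx_\<alpha>'_iff midx_update \<alpha>_l0 list_update_same_conv)
    show "h (\<iota>[l0 := n]) = ?F \<iota>" using \<iota> by (simp add: T_def)
  next
    fix \<iota> assume \<iota>: "\<iota> \<in> midx \<alpha>' \<inter> M"
    then have "l0 < length \<iota>" using l0 length_midx by auto
    with \<iota> show "(\<iota>[l0 := Suc n])[l0 := n] = \<iota>" "\<iota>[l0 := Suc n] \<in> midx \<alpha> \<inter> T"
      by (auto simp: T_def M_def midx_\<alpha>'_iff midx_update \<alpha>_l0 list_update_same_conv)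
  qed
  have "sum ?F (midx \<alpha>') = sum ?F (midx \<alpha>' - M)"
    by (rule sum.mono_neutral_right[OF finite_midx]) (auto simp: M_def)
  also have "\<dots> = sum h (midx \<alpha>' - M)"
    by (rule sum.cong) (auto simp: M_def midx_\<alpha>'_iff)
  finally have low: "sum ?F (midx \<alpha>') = sum h (midx \<alpha>' - M)" .
  have "sum h (midx \<alpha>') = sum h (midx \<alpha>' \<inter> M) + sum h (midx \<alpha>' - M)"
    by (rule sum.Int_Diff[OF finite_midx])
  then show ?thesis by (simp add: split top low)
qed

lemma divdiff_coeff_recursion:
  fixes X :: "nat \<Rightarrow> nat \<Rightarrow> 'k::field"
  assumes inj: "inj_on (X l0) {..Suc n}" and \<iota>: "\<iota> \<in> midx \<alpha>"
  defines "X' \<equiv> X(l0 := (X l0)(n := X l0 (Suc n)))"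
  shows "divdiff_coeff \<alpha> X \<iota> = inverse (X l0 (Suc n) - X l0 n) *
     ((if \<iota>!l0 = n then 0 else if \<iota>!l0 = Suc n then divdiff_coeff \<alpha>' X' (\<iota>[l0 := n])
       else divdiff_coeff \<alpha>' X' \<iota>) -
      (if \<iota>!l0 = Suc n then 0 else divdiff_coeff \<alpha>' X \<iota>))"
proof -
  define P where
    "P (Y :: nat \<Rightarrow> nat \<Rightarrow> 'k) \<kappa> = (\<Prod>l\<in>{..<length \<alpha>}-{l0}. divdiff_weight (\<alpha>!l) (Y l) (\<kappa>!l))"
    for Y \<kappa>
  have coeff_\<alpha>': "divdiff_coeff \<alpha>' Y \<kappa> = divdiff_weight n (Y l0) (\<kappa>!l0) * P Y \<kappa>" for Y \<kappa>
    using divdiff_coeff_split[of l0 \<alpha>' Y \<kappa>] l0 unfolding P_def by (simp add: \<alpha>'_nth)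
  have P_X': "P X' \<kappa> = P X \<kappa>" for \<kappa>
    unfolding P_def X'_def by (intro prod.cong) auto
  have P_update: "P Y (\<kappa>[l0 := m]) = P Y \<kappa>" for Y \<kappa> m
    unfolding P_def by (intro prod.cong) auto
  have main: "divdiff_coeff \<alpha> X \<iota> = divdiff_weight (Suc n) (X l0) (\<iota>!l0) * P X \<iota>"
    using divdiff_coeff_split[OF l0, of X \<iota>] \<alpha>_l0 unfolding P_def by simp
  have "l0 < length \<iota>" using \<iota> l0 length_midx by auto
  then have coeffs: "divdiff_coeff \<alpha>' X' (\<iota>[l0 := n]) = divdiff_weight n (X' l0) n * P X \<iota>"
    "divdiff_coeff \<alpha>' X' \<iota> = divdiff_weight n (X' l0) (\<iota>!l0) * P X \<iota>"
    "divdiff_coeff \<alpha>' X \<iota> = divdiff_weight n (X l0) (\<iota>!l0) * P X \<iota>"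
    by (simp_all add: coeff_\<alpha>' P_X' P_update)
  have X'_l0: "X' l0 = (X l0)(n := X l0 (Suc n))" by (simp add: X'_def)
  show ?thesis
    unfolding main coeffs X'_l0 divdiff_weight_recursion[OF inj midx_le_top[OF \<iota>]]
    by (simp add: algebra_simps)
qed

lemma divdiff_recursion:
  fixes smul :: "'k::field \<Rightarrow> 'f::ab_group_add \<Rightarrow> 'f"
  assumes vs: "vector_space smul" and inj: "inj_on (X l0) {..Suc n}"
  defines "X' \<equiv> X(l0 := (X l0)(n := X l0 (Suc n)))"
  shows "divdiff smul \<alpha> X f =
    smul (inverse (X l0 (Suc n) - X l0 n)) (divdiff smul \<alpha>' X' f - divdiff smul \<alpha>' X f)"
proof -
  interpret vector_space smul by (rule vs)
  define s where "s = inverse (X l0 (Suc n) - X l0 n)"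
  define v where "v (Y :: nat \<Rightarrow> nat \<Rightarrow> 'k) \<iota> = f (map (\<lambda>l. Y l (\<iota>!l)) [0..<length \<alpha>])" for Y \<iota>
  define a where "a \<iota> = (if \<iota>!l0 = n then 0 else if \<iota>!l0 = Suc n
    then divdiff_coeff \<alpha>' X' (\<iota>[l0 := n]) else divdiff_coeff \<alpha>' X' \<iota>)" for \<iota>
  define b where "b \<iota> = (if \<iota>!l0 = Suc n then 0 else divdiff_coeff \<alpha>' X \<iota>)" for \<iota>
  have divdiff_\<alpha>': "divdiff smul \<alpha>' Y f = (\<Sum>\<iota>\<in>midx \<alpha>'. smul (divdiff_coeff \<alpha>' Y \<iota>) (v Y \<iota>))" for Y
    by (simp add: divdiff_def v_def)
  have "divdiff smul \<alpha> X f = (\<Sum>\<iota>\<in>midx \<alpha>. smul (s * (a \<iota> - b \<iota>)) (v X \<iota>))"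
    unfolding divdiff_def v_def
    by (intro sum.cong refl)
      (simp add: divdiff_coeff_recursion[of X, OF inj] s_def a_def b_def X'_def)
  also have "\<dots> = smul s ((\<Sum>\<iota>\<in>midx \<alpha>. smul (a \<iota>) (v X \<iota>)) - (\<Sum>\<iota>\<in>midx \<alpha>. smul (b \<iota>) (v X \<iota>)))"
    by (simp add: scale_sum_right sum_subtractf scale_left_diff_distrib scale_right_diff_distrib
        right_diff_distrib)
  also have "(\<Sum>\<iota>\<in>midx \<alpha>. smul (b \<iota>) (v X \<iota>)) = divdiff smul \<alpha>' X f"
    unfolding divdiff_\<alpha>' by (rule sum_midx_drop_top[THEN trans], simp add: b_def)
      (rule sum.cong, auto simp: b_def midx_\<alpha>'_iff)
  also have "(\<Sum>\<iota>\<in>midx \<alpha>. smul (a \<iota>) (v X \<iota>)) = divdiff smul \<alpha>' X' f"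
  proof -
    have "smul (a \<iota>) (v X \<iota>) = (if \<iota>!l0 = n then 0 else if \<iota>!l0 = Suc n
        then smul (divdiff_coeff \<alpha>' X' (\<iota>[l0 := n])) (v X' (\<iota>[l0 := n]))
        else smul (divdiff_coeff \<alpha>' X' \<iota>) (v X' \<iota>))" if "\<iota> \<in> midx \<alpha>" for \<iota>
    proof -
      have "l0 < length \<iota>" using that l0 length_midx by auto
      then have "v X' (\<iota>[l0 := n]) = v X \<iota>" if "\<iota>!l0 = Suc n"
        using that by (auto simp: v_def X'_def nth_list_update intro!: arg_cong[where f = f])
      moreover have "v X' \<iota> = v X \<iota>" if "\<iota>!l0 \<noteq> n"
        using that by (auto simp: v_def X'_def intro!: arg_cong[where f = f])
      ultimately show ?thesis by (simp add: a_def)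
    qed
    then show ?thesis
      unfolding divdiff_\<alpha>' by (subst sum_midx_shift_top[symmetric]) (rule sum.cong, auto)
  qed
  finally show ?thesis by (simp add: s_def)
qed

end

definition blk_offset :: "nat list \<Rightarrow> nat \<Rightarrow> nat" where
  "blk_offset \<alpha> l = sum_list (map Suc (take l \<alpha>))"

lemma blk_eq_nth: "blk \<alpha> x l m = x ! (blk_offset \<alpha> l + m)"
  by (simp add: blk_def blk_offset_def)

lemma blk_offset_eq_sum: "l \<le> length \<alpha> \<Longrightarrow> blk_offset \<alpha> l = (\<Sum>i<l. Suc (\<alpha>!i))"
  unfolding blk_offset_def sum_list_sum_nth by (simp add: min_def atLeast0LessThan)

lemma blk_offset_Suc: "l < length \<alpha> \<Longrightarrow> blk_offset \<alpha> (Suc l) = blk_offset \<alpha> l + Suc (\<alpha>!l)"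
  by (simp add: blk_offset_eq_sum)

lemma blk_offset_mono: "l \<le> l' \<Longrightarrow> l' \<le> length \<alpha> \<Longrightarrow> blk_offset \<alpha> l \<le> blk_offset \<alpha> l'"
  by (simp add: blk_offset_eq_sum sum_mono2)

lemma blk_offset_length: "blk_offset \<alpha> (length \<alpha>) = length \<alpha> + sum_list \<alpha>"
  by (induction \<alpha>) (auto simp: blk_offset_def)

lemma blk_offset_less:
  assumes "l < length \<alpha>" "m \<le> \<alpha>!l"
  shows "blk_offset \<alpha> l + m < length \<alpha> + sum_list \<alpha>"
proof -
  have "blk_offset \<alpha> l + m < blk_offset \<alpha> (Suc l)" using assms by (simp add: blk_offset_Suc)
  also have "\<dots> \<le> blk_offset \<alpha> (length \<alpha>)" using assms by (intro blk_offset_mono) auto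
  finally show ?thesis by (simp add: blk_offset_length)
qed

lemma blk_offset_update: "l \<le> l0 \<Longrightarrow> blk_offset (\<alpha>[l0 := v]) l = blk_offset \<alpha> l"
  by (simp add: blk_offset_def)

fun block_of :: "nat list \<Rightarrow> nat \<Rightarrow> nat" where
  "block_of [] p = 0"
| "block_of (a # \<alpha>) p = (if p \<le> a then 0 else Suc (block_of \<alpha> (p - Suc a)))"

lemma blk_offset_Cons_0 [simp]: "blk_offset (a # \<alpha>) 0 = 0"
  by (simp add: blk_offset_def)

lemma blk_offset_Cons_Suc [simp]: "blk_offset (a # \<alpha>) (Suc l) = Suc a + blk_offset \<alpha> l"
  by (simp add: blk_offset_def)

lemma block_of_blk_offset: "l < length \<alpha> \<Longrightarrow> m \<le> \<alpha>!l \<Longrightarrow> block_of \<alpha> (blk_offset \<alpha> l + m) = l"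
proof (induction \<alpha> arbitrary: l)
  case (Cons a \<alpha>)
  then show ?case by (cases l) auto
qed simp

lemma block_of_less:
  "p < length \<alpha> + sum_list \<alpha> \<Longrightarrow>
    block_of \<alpha> p < length \<alpha> \<and> blk_offset \<alpha> (block_of \<alpha> p) \<le> p \<and>
    p - blk_offset \<alpha> (block_of \<alpha> p) \<le> \<alpha> ! block_of \<alpha> p"
proof (induction \<alpha> arbitrary: p)
  case (Cons a \<alpha>)
  show ?case
  proof (cases "p \<le> a")
    case False
    define q where "q = p - Suc a"
    have p: "p = Suc a + q" using False by (simp add: q_def)
    show ?thesis using Cons.IH[of q] Cons.prems unfolding p by auto
  qed simp
qed simp

definition remove_nth :: "nat \<Rightarrow> 'a list \<Rightarrow> 'a list" where
  "remove_nth q x = take q x @ drop (Suc q) x"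

lemma length_remove_nth: "q < length x \<Longrightarrow> length (remove_nth q x) = length x - 1"
  by (simp add: remove_nth_def)

lemma nth_remove_nth:
  "q < length x \<Longrightarrow> i < length x - 1 \<Longrightarrow> remove_nth q x ! i = x ! (if i < q then i else Suc i)"
  by (auto simp: remove_nth_def nth_append min_def)

lemma inj_on_blk_Urev: "x \<in> Urev U \<beta> \<Longrightarrow> l < length \<beta> \<Longrightarrow> inj_on (blk \<beta> x l) {..\<beta>!l}"
  by (auto simp: Urev_def inj_on_def)

context multiindex_decrement
begin

lemma blk_offset_\<alpha>'_above:
  assumes "l0 < l" "l \<le> length \<alpha>"
  shows "Suc (blk_offset \<alpha>' l) = blk_offset \<alpha> l"
proof -
  have "blk_offset \<alpha> l = Suc (\<alpha>!l0) + (\<Sum>i\<in>{..<l}-{l0}. Suc (\<alpha>!i))"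
    using assms by (simp add: blk_offset_eq_sum sum.remove[of "{..<l}" l0])
  moreover have "blk_offset \<alpha>' l = Suc n + (\<Sum>i\<in>{..<l}-{l0}. Suc (\<alpha>!i))"
    using assms by (simp add: blk_offset_eq_sum sum.remove[of "{..<l}" l0] \<alpha>'_nth)
  ultimately show ?thesis using \<alpha>_l0 by simp
qed

text \<open>In \<open>x\<close>, the node \<open>x^(l0)_(n+1)\<close> sits at position \<open>top_pos\<close>, right after
  \<open>x^(l0)_n\<close>. Removing the former, resp. the latter, from \<open>x\<close> gives the points
  \<open>omit_top x\<close> and \<open>omit_prev x\<close> of \<open>(K^d)^<\<alpha>'>\<close>.\<close>

definition top_pos :: nat where
  "top_pos = blk_offset \<alpha> l0 + Suc n"

definition omit_top :: "'a list \<Rightarrow> 'a list" where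
  "omit_top x = remove_nth top_pos x"

definition omit_prev :: "'a list \<Rightarrow> 'a list" where
  "omit_prev x = (omit_top x)[top_pos - 1 := x ! top_pos]"

lemma top_pos_less: "top_pos < length \<alpha> + sum_list \<alpha>"
  unfolding top_pos_def using blk_offset_less[OF l0, of "Suc n"] \<alpha>_l0 by simp

lemma top_pos_pos: "0 < top_pos"
  by (simp add: top_pos_def)

lemma nth_top_pos: "x ! top_pos = blk \<alpha> x l0 (Suc n)"
  by (simp add: blk_eq_nth top_pos_def)

lemma nth_top_pos_prev: "x ! (top_pos - 1) = blk \<alpha> x l0 n"
  by (simp add: blk_eq_nth top_pos_def)

lemma blk_offset_\<alpha>'_cases:
  assumes l: "l < length \<alpha>" and m: "m \<le> \<alpha>'!l"
  shows "(l \<le> l0 \<and> blk_offset \<alpha>' l = blk_offset \<alpha> l \<and> blk_offset \<alpha> l + m < top_pos \<and>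
          (blk_offset \<alpha> l + m = top_pos - 1 \<longleftrightarrow> l = l0 \<and> m = n))
       \<or> (l0 < l \<and> blk_offset \<alpha> l = Suc (blk_offset \<alpha>' l) \<and> top_pos \<le> blk_offset \<alpha>' l + m)"
proof (cases "l \<le> l0")
  case True
  have same: "blk_offset \<alpha>' l = blk_offset \<alpha> l"
    unfolding \<alpha>'_def using True by (rule blk_offset_update)
  show ?thesis
  proof (cases "l = l0")
    case True
    then show ?thesis using same m by (auto simp: top_pos_def)
  next
    case False
    then have "l < l0" using True by simp
    have "blk_offset \<alpha> l + m < blk_offset \<alpha> (Suc l)"
      using m l False by (simp add: blk_offset_Suc \<alpha>'_nth)
    also have "\<dots> \<le> blk_offset \<alpha> l0" using \<open>l < l0\<close> l0 by (intro blk_offset_mono) auto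
    finally show ?thesis using same \<open>l < l0\<close> by (auto simp: top_pos_def)
  qed
next
  case False
  then have "l0 < l" by simp
  have "blk_offset \<alpha> (Suc l0) \<le> blk_offset \<alpha> l" using \<open>l0 < l\<close> l by (intro blk_offset_mono) auto
  then have "Suc top_pos \<le> blk_offset \<alpha> l" using l0 \<alpha>_l0 by (simp add: blk_offset_Suc top_pos_def)
  then show ?thesis using blk_offset_\<alpha>'_above[OF \<open>l0 < l\<close>] l \<open>l0 < l\<close> by auto
qed

lemma length_omit_top:
  "length x = length \<alpha> + sum_list \<alpha> \<Longrightarrow> length (omit_top x) = length \<alpha>' + sum_list \<alpha>'"
  using length_remove_nth[of top_pos x] top_pos_less sum_list_\<alpha>' by (simp add: omit_top_def)

lemma length_omit_prev:
  "length x = length \<alpha> + sum_list \<alpha> \<Longrightarrow> length (omit_prev x) = length \<alpha>' + sum_list \<alpha>'"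
  by (simp add: omit_prev_def length_omit_top)

lemma blk_omit_top:
  assumes x: "length x = length \<alpha> + sum_list \<alpha>" and l: "l < length \<alpha>" and m: "m \<le> \<alpha>'!l"
  shows "blk \<alpha>' (omit_top x) l m = blk \<alpha> x l m"
proof -
  have q: "top_pos < length x" using top_pos_less x by simp
  have "blk_offset \<alpha> l + m < length x" using blk_offset_less[OF l \<alpha>'_le[OF l m]] x by simp
  with blk_offset_\<alpha>'_cases[OF l m] q show ?thesis
    unfolding blk_eq_nth omit_top_def by (auto simp: nth_remove_nth)
qed

lemma blk_omit_prev:
  assumes x: "length x = length \<alpha> + sum_list \<alpha>" and l: "l < length \<alpha>" and m: "m \<le> \<alpha>'!l"
  shows "blk \<alpha>' (omit_prev x) l m = (if l = l0 \<and> m = n then blk \<alpha> x l0 (Suc n) else blk \<alpha> x l m)"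
proof -
  have "length (omit_top x) = length x - 1"
    using length_remove_nth[of top_pos x] top_pos_less x by (simp add: omit_top_def)
  moreover have "blk_offset \<alpha>' l + m < length x - 1"
    using blk_offset_less[of l \<alpha>' m] l m x sum_list_\<alpha>' by simp
  ultimately show ?thesis
    using blk_offset_\<alpha>'_cases[OF l m] blk_omit_top[OF x l m] nth_top_pos[of x] top_pos_pos
    unfolding omit_prev_def blk_eq_nth by (auto simp: nth_list_update)
qed

lemma midx_\<alpha>'_subset: "midx \<alpha>' \<subseteq> midx \<alpha>"
  by (auto simp: midx_\<alpha>'_iff)

lemma pt_omit_top:
  assumes "length x = length \<alpha> + sum_list \<alpha>" "\<iota> \<in> midx \<alpha>'"
  shows "pt \<alpha>' (omit_top x) \<iota> = pt \<alpha> x \<iota>"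
proof -
  have "\<iota>!l \<le> \<alpha>'!l" if "l < length \<alpha>" for l
    using assms(2) that by (simp add: midx_def)
  then show ?thesis by (simp add: pt_def blk_omit_top[OF assms(1)])
qed

lemma pt_omit_prev:
  assumes "length x = length \<alpha> + sum_list \<alpha>" "\<iota> \<in> midx \<alpha>'"
  shows "pt \<alpha>' (omit_prev x) \<iota> = pt \<alpha> x (if \<iota>!l0 = n then \<iota>[l0 := Suc n] else \<iota>)"
proof -
  have "\<iota>!l \<le> \<alpha>'!l" if "l < length \<alpha>" for l
    using assms(2) that by (simp add: midx_def)
  moreover have "l0 < length \<iota>" using assms(2) l0 by (simp add: midx_def)
  ultimately show ?thesis
    by (cases "\<iota>!l0 = n") (auto simp: pt_def blk_omit_prev[OF assms(1)] nth_list_update)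
qed

lemma omit_top_in_Uang:
  assumes "x \<in> Uang U \<alpha>"
  shows "omit_top x \<in> Uang U \<alpha>'"
proof -
  have len: "length x = length \<alpha> + sum_list \<alpha>" and U: "\<forall>\<iota>\<in>midx \<alpha>. pt \<alpha> x \<iota> \<in> U"
    using assms by (auto simp: Uang_def)
  have "pt \<alpha>' (omit_top x) \<iota> \<in> U" if "\<iota> \<in> midx \<alpha>'" for \<iota>
    using U midx_\<alpha>'_subset that pt_omit_top[OF len that] by auto
  then show ?thesis using length_omit_top[OF len] by (simp add: Uang_def)
qed

lemma omit_prev_in_Uang:
  assumes "x \<in> Uang U \<alpha>"
  shows "omit_prev x \<in> Uang U \<alpha>'"
proof -
  have len: "length x = length \<alpha> + sum_list \<alpha>" and U: "\<forall>\<iota>\<in>midx \<alpha>. pt \<alpha> x \<iota> \<in> U"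
    using assms by (auto simp: Uang_def)
  have "(if \<iota>!l0 = n then \<iota>[l0 := Suc n] else \<iota>) \<in> midx \<alpha>" if "\<iota> \<in> midx \<alpha>'" for \<iota>
    using that midx_\<alpha>'_subset midx_update[where l = l0 and m = "Suc n"] \<alpha>_l0 by auto
  then have "pt \<alpha>' (omit_prev x) \<iota> \<in> U" if "\<iota> \<in> midx \<alpha>'" for \<iota>
    using U that pt_omit_prev[OF len that] by auto
  then show ?thesis using length_omit_prev[OF len] by (simp add: Uang_def)
qed

lemma omit_top_in_Urev:
  assumes x: "x \<in> Urev U \<alpha>"
  shows "omit_top x \<in> Urev U \<alpha>'"
proof -
  have len: "length x = length \<alpha> + sum_list \<alpha>" using x by (simp add: Urev_def Uang_def)
  have "blk \<alpha>' (omit_top x) l m \<noteq> blk \<alpha>' (omit_top x) l m'"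
    if "l < length \<alpha>" "m \<le> \<alpha>'!l" "m' \<le> \<alpha>'!l" "m \<noteq> m'" for l m m'
    using x that \<alpha>'_le[of l m] \<alpha>'_le[of l m'] by (auto simp: blk_omit_top[OF len] Urev_def)
  then show ?thesis using omit_top_in_Uang x by (auto simp: Urev_def)
qed

lemma omit_prev_in_Urev:
  assumes x: "x \<in> Urev U \<alpha>"
  shows "omit_prev x \<in> Urev U \<alpha>'"
proof -
  have len: "length x = length \<alpha> + sum_list \<alpha>" using x by (simp add: Urev_def Uang_def)
  have D: "blk \<alpha> x l a \<noteq> blk \<alpha> x l b" if "l < length \<alpha>" "a \<le> \<alpha>!l" "b \<le> \<alpha>!l" "a \<noteq> b"
    for l a b
    using x that by (auto simp: Urev_def)
  have "blk \<alpha>' (omit_prev x) l m \<noteq> blk \<alpha>' (omit_prev x) l m'"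
    if "l < length \<alpha>" "m \<le> \<alpha>'!l" "m' \<le> \<alpha>'!l" "m \<noteq> m'" for l m m'
    using that D[of l m m'] D[of l0 "Suc n" m'] D[of l0 m "Suc n"] \<alpha>'_le[of l m] \<alpha>'_le[of l m']
      \<alpha>_l0 l0 by (auto simp: blk_omit_prev[OF len])
  then show ?thesis using omit_prev_in_Uang x by (auto simp: Urev_def)
qed

lemma frev_recursion:
  fixes smul :: "'k::field \<Rightarrow> 'f::ab_group_add \<Rightarrow> 'f"
  assumes vs: "vector_space smul" and x: "x \<in> Urev U \<alpha>"
  shows "frev smul \<alpha> f x = smul (inverse (x ! top_pos - x ! (top_pos - 1)))
    (frev smul \<alpha>' f (omit_prev x) - frev smul \<alpha>' f (omit_top x))"
proof -
  have len: "length x = length \<alpha> + sum_list \<alpha>" using x by (simp add: Urev_def Uang_def)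
  define X where "X = blk \<alpha> x"
  have "divdiff smul \<alpha>' (blk \<alpha>' (omit_top x)) f = divdiff smul \<alpha>' X f"
    by (rule divdiff_cong) (simp add: blk_omit_top[OF len] X_def)
  moreover have "divdiff smul \<alpha>' (blk \<alpha>' (omit_prev x)) f
      = divdiff smul \<alpha>' (X(l0 := (X l0)(n := X l0 (Suc n)))) f"
    by (rule divdiff_cong) (auto simp: blk_omit_prev[OF len] X_def)
  ultimately show ?thesis
    unfolding frev_eq_divdiff nth_top_pos nth_top_pos_prev
    using divdiff_recursion[OF vs, of X] inj_on_blk_Urev[OF x l0] \<alpha>_l0 by (simp add: X_def)
qed

end

lemma affine_lmap_length: "affine_lmap n N \<theta> \<Longrightarrow> length x = n \<Longrightarrow> length (\<theta> x) = N"
  unfolding affine_lmap_def by auto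

lemma affine_lmap_id: "affine_lmap n n (\<lambda>x. x)"
  unfolding affine_lmap_def
proof (intro exI allI impI)
  fix x :: "'a list" assume x: "length x = n"
  have "(\<Sum>m<n. (if i = m then 1 else 0) * x!m) = x!i" if "i < n" for i
  proof -
    have "(\<Sum>m<n. (if i = m then 1 else 0) * x!m) = (\<Sum>m<n. if m = i then x!i else 0)"
      by (intro sum.cong) auto
    then show ?thesis using that by simp
  qed
  then show "x = map (\<lambda>i. 0 + (\<Sum>m<n. (if i = m then 1 else 0) * x!m)) [0..<n]"
    using x by (intro nth_equalityI) auto
qed

lemma affine_lmap_append:
  assumes "affine_lmap n N1 \<theta>1" "affine_lmap n N2 \<theta>2"
  shows "affine_lmap n (N1 + N2) (\<lambda>x. \<theta>1 x @ \<theta>2 x)"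
proof -
  obtain A1 b1 where 1: "\<And>x. length x = n \<Longrightarrow>
      \<theta>1 x = map (\<lambda>i. b1 i + (\<Sum>m<n. A1 i m * x!m)) [0..<N1]"
    using assms(1) unfolding affine_lmap_def by blast
  obtain A2 b2 where 2: "\<And>x. length x = n \<Longrightarrow>
      \<theta>2 x = map (\<lambda>i. b2 i + (\<Sum>m<n. A2 i m * x!m)) [0..<N2]"
    using assms(2) unfolding affine_lmap_def by blast
  show ?thesis unfolding affine_lmap_def
  proof (intro exI allI impI)
    fix x :: "'a list" assume "length x = n"
    then show "\<theta>1 x @ \<theta>2 x = map (\<lambda>i. (if i < N1 then b1 i else b2 (i - N1)) +
        (\<Sum>m<n. (if i < N1 then A1 i m else A2 (i - N1) m) * x!m)) [0..<N1 + N2]"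
      using 1 2 by (intro nth_equalityI) (auto simp: nth_append)
  qed
qed

lemma affine_lmap_const: "length c = N \<Longrightarrow> affine_lmap n N (\<lambda>x. c)"
  unfolding affine_lmap_def
  by (rule exI[of _ "\<lambda>i m. 0"], rule exI[of _ "\<lambda>i. c!i"]) (auto intro: nth_equalityI)

lemma affine_lmap_nth_diff:
  assumes "q < n" "p < n"
  shows "affine_lmap n 1 (\<lambda>x::'a::field list. [x!q - x!p])"
  unfolding affine_lmap_def
proof (intro exI allI impI)
  fix x :: "'a list"
  have "(\<Sum>m<n. ((if m = q then 1 else 0) - (if m = p then 1 else 0)) * x!m)
      = (\<Sum>m<n. if m = q then x!q else 0) - (\<Sum>m<n. if m = p then x!p else 0)"
    unfolding sum_subtractf[symmetric] by (intro sum.cong) auto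
  then show "[x!q - x!p] = map (\<lambda>i. 0 +
      (\<Sum>m<n. ((if m = q then 1 else 0) - (if m = p then 1 else 0)) * x!m)) [0..<1]"
    using assms by simp
qed

lemma affine_lmap_select:
  assumes "affine_lmap n N \<theta>" "\<forall>m<n. \<sigma> m < n'"
  shows "affine_lmap n' N (\<lambda>x. \<theta> (map (\<lambda>m. x!(\<sigma> m)) [0..<n]))"
proof -
  obtain A b where \<theta>: "\<And>x. length x = n \<Longrightarrow> \<theta> x = map (\<lambda>i. b i + (\<Sum>m<n. A i m * x!m)) [0..<N]"
    using assms(1) unfolding affine_lmap_def by blast
  define A' where "A' i m' = (\<Sum>m\<in>{m. m < n \<and> \<sigma> m = m'}. A i m)" for i m'
  have "(\<Sum>m<n. A i m * x!(\<sigma> m)) = (\<Sum>m'<n'. A' i m' * x!m')" for i and x :: "'a list"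
  proof -
    have "(\<Sum>m'<n'. A' i m' * x!m') = (\<Sum>m'<n'. \<Sum>m\<in>{m \<in> {..<n}. \<sigma> m = m'}. A i m * x!(\<sigma> m))"
      unfolding A'_def by (intro sum.cong refl) (auto simp: sum_distrib_right)
    also have "\<dots> = (\<Sum>m<n. A i m * x!(\<sigma> m))"
      by (rule sum.group) (use assms(2) in auto)
    finally show ?thesis by simp
  qed
  then show ?thesis
    unfolding affine_lmap_def using \<theta> by (intro exI[of _ A'] exI[of _ b]) simp
qed

lemma affine_lmap_remove_nth:
  assumes "affine_lmap n N \<theta>" "q < Suc n"
  shows "affine_lmap (Suc n) N (\<lambda>x. \<theta> (remove_nth q x))"
proof -
  have "remove_nth q x = map (\<lambda>m. x!(if m < q then m else Suc m)) [0..<n]"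
    if "length x = Suc n" for x :: "'a list"
    using that assms(2) by (intro nth_equalityI) (auto simp: length_remove_nth nth_remove_nth)
  moreover have "affine_lmap (Suc n) N (\<lambda>x. \<theta> (map (\<lambda>m. x!(if m < q then m else Suc m)) [0..<n]))"
    by (rule affine_lmap_select[OF assms(1)]) auto
  ultimately show ?thesis by (simp add: affine_lmap_def)
qed

lemma affine_lmap_update:
  fixes \<theta> :: "'a::field list \<Rightarrow> 'a list"
  assumes "affine_lmap n N \<theta>" "p < n"
  shows "\<exists>w. length w = N \<and> (\<forall>y v. length y = n \<longrightarrow> \<theta> (y[p := v]) = ladd (\<theta> y) (v - y!p) w)"
proof -
  obtain A b where \<theta>: "\<And>x. length x = n \<Longrightarrow> \<theta> x = map (\<lambda>i. b i + (\<Sum>m<n. A i m * x!m)) [0..<N]"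
    using assms(1) unfolding affine_lmap_def by blast
  have "(\<Sum>m<n. A i m * y[p := v]!m) = (\<Sum>m<n. A i m * y!m) + (v - y!p) * A i p"
    if "length y = n" for i y v
  proof -
    have "(\<Sum>m<n. A i m * y[p := v]!m) = (\<Sum>m<n. A i m * y!m + (if m = p then (v - y!p) * A i p else 0))"
      using that by (intro sum.cong) (auto simp: nth_list_update algebra_simps)
    then show ?thesis using assms(2) by (simp add: sum.distrib)
  qed
  then show ?thesis
    using \<theta> by (intro exI[of _ "map (\<lambda>i. A i p) [0..<N]"]) (auto simp: ladd_def intro: nth_equalityI)
qed

section \<open>The maps \<open>\<theta>\<^sub>\<alpha>\<close> on the points with distinct nodes\<close>

text \<open>\<open>\<theta>\<close> has the properties of \<open>\<theta>\<^sub>\<alpha>\<close>, except that \<open>f^<\<alpha>> = f^[j] \<circ> \<theta>\<close> is only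
  required on \<open>U^>\<alpha><\<close>, where \<open>f^<\<alpha>>\<close> is given by the explicit formula \<open>f^>\<alpha><\<close>.\<close>

definition divdiff_chart :: "('k::{field,t2_space} \<Rightarrow> 'f::{ab_group_add,t2_space} \<Rightarrow> 'f) \<Rightarrow>
    'k list set \<Rightarrow> nat list \<Rightarrow> ('k list \<Rightarrow> 'k list) \<Rightarrow> bool" where
  "divdiff_chart smul U \<alpha> \<theta> \<longleftrightarrow>
     affine_lmap (length \<alpha> + sum_list \<alpha>) (brdim (length \<alpha>) (sum_list \<alpha>)) \<theta> \<and>
     \<theta> ` Uang U \<alpha> \<subseteq> brj (sum_list \<alpha>) U \<and>
     (\<forall>f. Ck smul (sum_list \<alpha>) U f \<longrightarrow>
        (\<forall>x\<in>Urev U \<alpha>. frev smul \<alpha> f x = dj smul (sum_list \<alpha>) U f (\<theta> x)))"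

lemma nth_sum_list_0: "sum_list \<alpha> = 0 \<Longrightarrow> l < length \<alpha> \<Longrightarrow> \<alpha>!l = (0::nat)"
  by (simp add: sum_list_eq_0_iff)

lemma midx_sum_list_0:
  assumes "sum_list \<alpha> = 0"
  shows "midx \<alpha> = {replicate (length \<alpha>) 0}"
proof -
  have "\<iota> = replicate (length \<alpha>) 0" if "\<iota> \<in> midx \<alpha>" for \<iota>
    using that nth_sum_list_0[OF assms] by (intro nth_equalityI) (auto simp: midx_def)
  then show ?thesis by (auto simp: midx_def)
qed

lemma pt_sum_list_0:
  assumes "sum_list \<alpha> = 0" "length x = length \<alpha>"
  shows "pt \<alpha> x (replicate (length \<alpha>) 0) = x"
proof -
  have "blk_offset \<alpha> l = l" if "l \<le> length \<alpha>" for l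
  proof -
    have "(\<Sum>i<l. Suc (\<alpha>!i)) = (\<Sum>i<l. 1)"
      using nth_sum_list_0[OF assms(1)] that by (intro sum.cong) auto
    then show ?thesis using that by (simp add: blk_offset_eq_sum)
  qed
  then show ?thesis using assms(2) by (intro nth_equalityI) (auto simp: pt_def blk_eq_nth)
qed

lemma divdiff_chart_base:
  assumes vs: "vector_space smul" and \<alpha>: "sum_list \<alpha> = 0"
  shows "divdiff_chart smul U \<alpha> (\<lambda>x. x)"
proof -
  interpret vector_space smul by (rule vs)
  have pt: "pt \<alpha> x (replicate (length \<alpha>) 0) = x" if "x \<in> Uang U \<alpha>" for x
  proof (rule pt_sum_list_0[OF \<alpha>])
    show "length x = length \<alpha>" using that by (simp add: Uang_def \<alpha>)
  qed
  have "Uang U \<alpha> \<subseteq> U"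
  proof
    fix x assume "x \<in> Uang U \<alpha>"
    moreover from this have "pt \<alpha> x (replicate (length \<alpha>) 0) \<in> U"
      by (simp add: Uang_def midx_sum_list_0[OF \<alpha>])
    ultimately show "x \<in> U" using pt by simp
  qed
  moreover have "frev smul \<alpha> f x = f x" if "x \<in> Urev U \<alpha>" for f x
  proof -
    show ?thesis
      using nth_sum_list_0[OF \<alpha>]
      using that pt
      by (simp add: frev_def midx_sum_list_0[OF \<alpha>] Urev_def)
  qed
  ultimately show ?thesis using affine_lmap_id by (auto simp: divdiff_chart_def \<alpha>)
qed

context multiindex_decrement
begin

lemma affine_lmap_omit_prev:
  fixes \<theta> :: "'k::field list \<Rightarrow> 'k list"
  assumes "affine_lmap (length \<alpha>' + sum_list \<alpha>') N \<theta>"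
  obtains w where "length w = N" and "\<And>x. length x = length \<alpha> + sum_list \<alpha> \<Longrightarrow>
    \<theta> (omit_prev x) = ladd (\<theta> (omit_top x)) (x ! top_pos - x ! (top_pos - 1)) w"
proof -
  have q: "top_pos - 1 < length \<alpha>' + sum_list \<alpha>'"
    using top_pos_less top_pos_pos sum_list_\<alpha>' by simp
  obtain w where w: "length w = N"
    "\<And>y v. length y = length \<alpha>' + sum_list \<alpha>' \<Longrightarrow>
      \<theta> (y[top_pos - 1 := v]) = ladd (\<theta> y) (v - y!(top_pos - 1)) w"
    using affine_lmap_update[OF assms q] by blast
  have nth: "omit_top x ! (top_pos - 1) = x ! (top_pos - 1)"
    if "length x = length \<alpha> + sum_list \<alpha>" for x
    using that top_pos_less top_pos_pos by (simp add: omit_top_def nth_remove_nth)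
  show thesis
  proof (rule that[OF w(1)])
    fix x :: "'k list" assume x: "length x = length \<alpha> + sum_list \<alpha>"
    show "\<theta> (omit_prev x) = ladd (\<theta> (omit_top x)) (x ! top_pos - x ! (top_pos - 1)) w"
      unfolding omit_prev_def w(2)[OF length_omit_top[OF x]] nth[OF x] ..
  qed
qed

lemma affine_lmap_extend:
  assumes "affine_lmap (length \<alpha>' + sum_list \<alpha>') N \<theta>'" "length w = N"
  shows "affine_lmap (length \<alpha> + sum_list \<alpha>) (2 * N + 1)
    (\<lambda>x. \<theta>' (omit_top x) @ w @ [x ! top_pos - x ! (top_pos - 1)])"
proof -
  have "affine_lmap (Suc (length \<alpha>' + sum_list \<alpha>')) ((N + N) + 1)
      (\<lambda>x. (\<theta>' (remove_nth top_pos x) @ w) @ [x ! top_pos - x ! (top_pos - 1)])"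
    using top_pos_less top_pos_pos sum_list_\<alpha>'
    by (intro affine_lmap_append affine_lmap_remove_nth affine_lmap_const affine_lmap_nth_diff
        assms) auto
  then show ?thesis unfolding sum_list_\<alpha>'[symmetric] by (simp add: omit_top_def mult_2)
qed

lemma divdiff_chart_step:
  assumes vs: "vector_space smul" and chart: "divdiff_chart smul U \<alpha>' \<theta>'"
    and w: "length w = brdim (length \<alpha>) (sum_list \<alpha>')"
    and \<theta>'_omit_prev: "\<And>x. length x = length \<alpha> + sum_list \<alpha> \<Longrightarrow>
      \<theta>' (omit_prev x) = ladd (\<theta>' (omit_top x)) (x ! top_pos - x ! (top_pos - 1)) w"
  defines "\<theta> \<equiv> \<lambda>x. \<theta>' (omit_top x) @ w @ [x ! top_pos - x ! (top_pos - 1)]"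
  shows "divdiff_chart smul U \<alpha> \<theta>"
proof -
  define j where "j = sum_list \<alpha>'"
  have sum_\<alpha>: "sum_list \<alpha> = Suc j" using sum_list_\<alpha>' by (simp add: j_def)
  have aff': "affine_lmap (length \<alpha>' + sum_list \<alpha>') (brdim (length \<alpha>) j) \<theta>'"
    and img': "\<theta>' ` Uang U \<alpha>' \<subseteq> brj j U"
    and val': "\<And>f x. Ck smul j U f \<Longrightarrow> x \<in> Urev U \<alpha>' \<Longrightarrow> frev smul \<alpha>' f x = dj smul j U f (\<theta>' x)"
    using chart by (auto simp: divdiff_chart_def j_def)
  have len_x: "length x = length \<alpha> + sum_list \<alpha>" if "x \<in> Uang U \<alpha>" for x
    using that by (simp add: Uang_def)
  have len_\<theta>': "length (\<theta>' (omit_top x)) = length w" if "x \<in> Uang U \<alpha>" for x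
    using affine_lmap_length[OF aff' length_omit_top[OF len_x[OF that]]] w by (simp add: j_def)
  have aff: "affine_lmap (length \<alpha> + sum_list \<alpha>) (brdim (length \<alpha>) (sum_list \<alpha>)) \<theta>"
    using affine_lmap_extend[OF aff' w[folded j_def]] unfolding \<theta>_def
    by (simp add: sum_\<alpha> brdim_Suc del: brdim.simps(2))
  have img: "\<theta> x \<in> br1 (brj j U)" if "x \<in> Uang U \<alpha>" for x
    unfolding \<theta>_def using img' omit_top_in_Uang[OF that] omit_prev_in_Uang[OF that]
      \<theta>'_omit_prev[OF len_x[OF that]] len_\<theta>'[OF that] by (intro append_in_br1) auto
  have "frev smul \<alpha> f x = dj smul (Suc j) U f (\<theta> x)"
    if f: "Ck smul (Suc j) U f" and x: "x \<in> Urev U \<alpha>" for f x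
  proof -
    have x': "x \<in> Uang U \<alpha>" using x by (simp add: Urev_def)
    have "x ! top_pos \<noteq> x ! (top_pos - 1)"
      unfolding nth_top_pos nth_top_pos_prev
      using inj_onD[OF inj_on_blk_Urev[OF x l0], of "Suc n" n] \<alpha>_l0 by auto
    then have "dj smul (Suc j) U f (\<theta> x) = diffquot smul (dj smul j U f) (\<theta> x)"
      using img[OF x'] by (intro dj_Suc_eq_diffquot f)
        (auto simp: brj_Suc \<theta>_def bt_append simp del: brj.simps(2))
    also have "\<dots> = smul (inverse (x ! top_pos - x ! (top_pos - 1)))
        (dj smul j U f (\<theta>' (omit_prev x)) - dj smul j U f (\<theta>' (omit_top x)))"
      unfolding \<theta>_def diffquot_append[OF len_\<theta>'[OF x', symmetric]] \<theta>'_omit_prev[OF len_x[OF x']] ..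
    also have "\<dots> = frev smul \<alpha> f x"
      using frev_recursion[OF vs x] val'[OF Ck_Suc_imp_Ck[OF f]] omit_top_in_Urev[OF x]
        omit_prev_in_Urev[OF x] by simp
    finally show ?thesis by simp
  qed
  then show ?thesis
    using aff img by (auto simp: divdiff_chart_def sum_\<alpha> brj_Suc simp del: brj.simps(2))
qed

end

lemma divdiff_chart_exists:
  assumes vs: "vector_space smul"
  shows "\<exists>\<theta>. divdiff_chart smul U \<alpha> \<theta>"
proof (induction "sum_list \<alpha>" arbitrary: \<alpha>)
  case 0
  then show ?case using divdiff_chart_base[OF vs] by metis
next
  case (Suc j)
  then obtain v where "v \<in> set \<alpha>" "v \<noteq> 0"
    using sum_list_eq_0_iff[of \<alpha>] by (metis nat.distinct(1))
  then obtain l0 n where "l0 < length \<alpha>" "\<alpha>!l0 = Suc n"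
    by (metis in_set_conv_nth not0_implies_Suc)
  then interpret multiindex_decrement \<alpha> l0 n
    by unfold_locales
  have "j = sum_list \<alpha>'" using sum_list_\<alpha>' Suc.hyps(2) by simp
  then obtain \<theta>' where \<theta>': "divdiff_chart smul U \<alpha>' \<theta>'" using Suc.hyps(1) by blast
  then have aff': "affine_lmap (length \<alpha>' + sum_list \<alpha>') (brdim (length \<alpha>) (sum_list \<alpha>')) \<theta>'"
    by (simp add: divdiff_chart_def)
  obtain w where "length w = brdim (length \<alpha>) (sum_list \<alpha>')"
    "\<And>x. length x = length \<alpha> + sum_list \<alpha> \<Longrightarrow>
      \<theta>' (omit_prev x) = ladd (\<theta>' (omit_top x)) (x ! top_pos - x ! (top_pos - 1)) w"
    using affine_lmap_omit_prev[OF aff'] by blast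
  then show ?case using divdiff_chart_step[OF vs \<theta>'] by blast
qed

lemma openin_ltop: "openin ltop = lopen"
  unfolding ltop_def by (rule topology_inverse'[OF istopology_lopen])

lemma lopen_UNIV: "lopen UNIV"
  unfolding lopen_def by (intro ballI exI[of _ "\<lambda>i. UNIV"]) auto

lemma topspace_ltop: "topspace ltop = UNIV"
  unfolding topspace_def openin_ltop using lopen_UNIV by auto

lemma topological_field_open_infinite:
  assumes tf: "topological_field TYPE('k::{field,t2_space})"
    and S: "open (S::'k set)" "S \<noteq> {}"
  shows "infinite S"
proof
  assume fin: "finite S"
  obtain a where a: "a \<in> S" using S by auto
  have "closed (S - {a})" using fin by (intro finite_imp_closed) auto
  then have "open (S - (S - {a}))" using S(1) by (rule open_Diff[rotated])
  moreover have "S - (S - {a}) = {a}" using a by auto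
  ultimately have oa: "open {a}" by simp
  have c: "continuous_on UNIV (\<lambda>p::'k \<times> 'k. fst p + snd p)"
    using tf by (simp add: topological_field_def)
  have "continuous_on UNIV (\<lambda>x::'k. (\<lambda>p::'k\<times>'k. fst p + snd p) (x, a))"
    by (rule continuous_on_compose2[OF c]) (auto intro!: continuous_intros)
  then have "open ((\<lambda>x::'k. x + a) -` {a})" using open_vimage[OF oa] by simp
  moreover have "(\<lambda>x::'k. x + a) -` {a} = {0}" by auto
  ultimately show False using tf by (simp add: topological_field_def)
qed

lemma continuous_map_binop:
  assumes "continuous_on UNIV (\<lambda>p. F (fst p) (snd p))"
    and "continuous_map X euclidean g" "continuous_map X euclidean h"
  shows "continuous_map X euclidean (\<lambda>x. F (g x) (h x))"
proof -
  have "continuous_map X euclidean (\<lambda>x. (g x, h x))"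
    using continuous_map_pairedI[OF assms(2,3)] by simp
  moreover have "continuous_map euclidean euclidean (\<lambda>p. F (fst p) (snd p))"
    using assms(1) by simp
  ultimately have "continuous_map X euclidean ((\<lambda>p. F (fst p) (snd p)) \<circ> (\<lambda>x. (g x, h x)))"
    by (rule continuous_map_compose)
  then show ?thesis by (simp add: o_def)
qed

lemma continuous_map_field_add:
  assumes "topological_field TYPE('k::{field,t2_space})"
    and "continuous_map X euclidean (g :: _ \<Rightarrow> 'k)" "continuous_map X euclidean h"
  shows "continuous_map X euclidean (\<lambda>x. g x + h x)"
  by (rule continuous_map_binop[where F = "(+)", OF _ assms(2,3)])
    (use assms(1) in \<open>simp add: topological_field_def\<close>)

lemma continuous_map_field_mult:
  assumes "topological_field TYPE('k::{field,t2_space})"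
    and "continuous_map X euclidean (g :: _ \<Rightarrow> 'k)" "continuous_map X euclidean h"
  shows "continuous_map X euclidean (\<lambda>x. g x * h x)"
  by (rule continuous_map_binop[where F = "(*)", OF _ assms(2,3)])
    (use assms(1) in \<open>simp add: topological_field_def\<close>)

lemma continuous_map_field_sum:
  fixes n :: nat
  assumes tf: "topological_field TYPE('k::{field,t2_space})"
    and "\<forall>m<n. continuous_map X euclidean (f m :: _ \<Rightarrow> 'k)"
  shows "continuous_map X euclidean (\<lambda>x. \<Sum>m<n. f m x)"
  using assms(2)
proof (induction n)
  case 0 then show ?case by simp
next
  case (Suc n)
  then show ?case by (simp add: continuous_map_field_add[OF tf])
qed

lemma continuous_map_ltop_nth:
  assumes "m < n" "S \<subseteq> {x. length x = n}"
  shows "continuous_map (subtopology ltop S) euclidean (\<lambda>x. x!m)"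
  unfolding continuous_map_def
proof (intro conjI allI impI)
  show "(\<lambda>x. x!m) \<in> topspace (subtopology ltop S) \<rightarrow> topspace euclidean" by simp
  fix U :: "'a set" assume "openin euclidean U"
  then have oU: "open U" by simp
  have "lopen {x. length x = n \<and> x!m \<in> U}"
    unfolding lopen_def using oU assms(1)
    by (intro ballI exI[of _ "\<lambda>i. if i = m then U else UNIV"]) auto
  then show "openin (subtopology ltop S) {x \<in> topspace (subtopology ltop S). x!m \<in> U}"
    unfolding openin_subtopology openin_ltop topspace_subtopology topspace_ltop
    by (intro exI[of _ "{x. length x = n \<and> x!m \<in> U}"]) (use assms(2) in auto)
qed

lemma continuous_map_into_ltop:
  fixes \<theta> :: "'a \<Rightarrow> 'b::topological_space list"
  assumes "\<forall>x\<in>topspace X. length (\<theta> x) = N"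
    and "\<forall>i<N. continuous_map X euclidean (\<lambda>x. \<theta> x ! i)"
  shows "continuous_map X ltop \<theta>"
  unfolding continuous_map_def
proof (intro conjI allI impI)
  show "\<theta> \<in> topspace X \<rightarrow> topspace ltop" by (simp add: topspace_ltop)
  fix Ob :: "'b list set" assume "openin ltop Ob"
  then have Ob: "lopen Ob" by (simp add: openin_ltop)
  show "openin X {x \<in> topspace X. \<theta> x \<in> Ob}"
  proof (subst openin_subopen, intro ballI)
    fix x assume x: "x \<in> {x \<in> topspace X. \<theta> x \<in> Ob}"
    then have lx: "length (\<theta> x) = N" using assms(1) by auto
    obtain A where A: "\<forall>i<N. open (A i) \<and> \<theta> x!i \<in> A i"
      "{y. length y = N \<and> (\<forall>i<N. y!i \<in> A i)} \<subseteq> Ob"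
      using Ob x lx unfolding lopen_def by force
    define T where "T = (\<Inter>i\<in>{..<N}. {z \<in> topspace X. \<theta> z ! i \<in> A i}) \<inter> topspace X"
    have oi: "openin X {z \<in> topspace X. \<theta> z ! i \<in> A i}" if i: "i < N" for i
    proof -
      have "openin euclidean (A i)" using A(1) i by (metis open_openin)
      then show ?thesis
        using openin_continuous_map_preimage[of X euclidean "\<lambda>x. \<theta> x ! i" "A i"] assms(2) i
        by blast
    qed
    have "openin X T" unfolding T_def
      by (rule openin_INT) (use oi in auto)
    moreover have "x \<in> T" using x A by (auto simp: T_def)
    moreover have "T \<subseteq> {x \<in> topspace X. \<theta> x \<in> Ob}"
      using A(2) assms(1) by (auto simp: T_def)
    ultimately show "\<exists>T. openin X T \<and> x \<in> T \<and> T \<subseteq> {x \<in> topspace X. \<theta> x \<in> Ob}" by blast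
  qed
qed

lemma continuous_map_affine_lmap:
  assumes tf: "topological_field TYPE('k::{field,t2_space})"
    and aff: "affine_lmap n N (\<theta> :: 'k list \<Rightarrow> 'k list)" and S: "S \<subseteq> {x. length x = n}"
  shows "continuous_map (subtopology ltop S) ltop \<theta>"
proof -
  obtain A b where \<theta>: "\<And>x. length x = n \<Longrightarrow> \<theta> x = map (\<lambda>i. b i + (\<Sum>m<n. A i m * x!m)) [0..<N]"
    using aff unfolding affine_lmap_def by blast
  have "continuous_map (subtopology ltop S) euclidean (\<lambda>x. b i + (\<Sum>m<n. A i m * x!m))" for i
    by (intro continuous_map_field_add[OF tf] continuous_map_const[THEN iffD2]
        continuous_map_field_sum[OF tf] allI impI continuous_map_field_mult[OF tf]
        continuous_map_ltop_nth[OF _ S]) auto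
  then have "continuous_map (subtopology ltop S) ltop (\<lambda>x. map (\<lambda>i. b i + (\<Sum>m<n. A i m * x!m)) [0..<N])"
    by (intro continuous_map_into_ltop) auto
  then show ?thesis
    by (rule continuous_map_eq) (use \<theta> S in \<open>auto simp: topspace_ltop\<close>)
qed

lemma Hausdorff_space_euclidean_t2: "Hausdorff_space (euclidean :: 'a::t2_space topology)"
  unfolding Hausdorff_space_def disjnt_def by (metis open_openin separation_t2)

lemma lopen_length: "lopen {x. length x = N}"
  unfolding lopen_def by (intro ballI exI[of _ "\<lambda>i. UNIV"]) auto

lemma continuous_map_pt:
  assumes "\<iota> \<in> midx \<alpha>"
  shows "continuous_map (subtopology ltop {x. length x = length \<alpha> + sum_list \<alpha>}) ltop (\<lambda>x. pt \<alpha> x \<iota>)"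
proof (rule continuous_map_into_ltop)
  show "\<forall>x\<in>topspace (subtopology ltop {x. length x = length \<alpha> + sum_list \<alpha>}).
      length (pt \<alpha> x \<iota>) = length \<alpha>"
    by (simp add: pt_def)
  show "\<forall>l<length \<alpha>. continuous_map (subtopology ltop {x. length x = length \<alpha> + sum_list \<alpha>})
      euclidean (\<lambda>x. pt \<alpha> x \<iota> ! l)"
  proof (intro allI impI)
    fix l assume l: "l < length \<alpha>"
    then have "blk_offset \<alpha> l + \<iota>!l < length \<alpha> + sum_list \<alpha>"
      using assms by (intro blk_offset_less) (auto simp: midx_def)
    then have "continuous_map (subtopology ltop {x. length x = length \<alpha> + sum_list \<alpha>})
        euclidean (\<lambda>x. x ! (blk_offset \<alpha> l + \<iota>!l))"
      by (intro continuous_map_ltop_nth) auto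
    then show "continuous_map (subtopology ltop {x. length x = length \<alpha> + sum_list \<alpha>})
        euclidean (\<lambda>x. pt \<alpha> x \<iota> ! l)"
      using l by (simp add: pt_def blk_eq_nth)
  qed
qed

lemma lopen_Uang:
  fixes U :: "'a::topological_space list set"
  assumes "lopen U"
  shows "lopen (Uang U \<alpha>)"
proof -
  define X where "X = subtopology ltop {x :: 'a list. length x = length \<alpha> + sum_list \<alpha>}"
  have U: "openin ltop U" using assms by (simp add: openin_ltop)
  have "openin X {x \<in> topspace X. pt \<alpha> x \<iota> \<in> U}" if "\<iota> \<in> midx \<alpha>" for \<iota>
    unfolding X_def by (rule openin_continuous_map_preimage[OF continuous_map_pt[OF that] U])
  then have "openin X ((\<Inter>\<iota>\<in>midx \<alpha>. {x \<in> topspace X. pt \<alpha> x \<iota> \<in> U}) \<inter> topspace X)"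
    by (intro openin_INT finite_midx)
  moreover have "(\<Inter>\<iota>\<in>midx \<alpha>. {x \<in> topspace X. pt \<alpha> x \<iota> \<in> U}) \<inter> topspace X = Uang U \<alpha>"
    by (auto simp: X_def topspace_ltop Uang_def)
  ultimately have "openin X (Uang U \<alpha>)" by simp
  then have "openin ltop (Uang U \<alpha>)"
    unfolding X_def by (rule openin_trans_full) (simp add: openin_ltop lopen_length)
  then show ?thesis by (simp add: openin_ltop)
qed

section \<open>Density of the points with distinct nodes\<close>

lemma exists_distinct_list:
  assumes "\<forall>p<n. infinite (S p)"
  shows "\<exists>y. length y = n \<and> distinct y \<and> (\<forall>p<n. y!p \<in> S p)"
  using assms
proof (induction n)
  case 0 then show ?case by simp
next
  case (Suc n)
  then obtain y where y: "length y = n" "distinct y" "\<forall>p<n. y!p \<in> S p" by auto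
  have "infinite (S n - set y)" using Suc.prems by (intro Diff_infinite_finite) auto
  then obtain z where z: "z \<in> S n" "z \<notin> set y" using infinite_imp_nonempty by blast
  show ?case
    by (rule exI[of _ "y @ [z]"]) (use y z in \<open>auto simp: nth_append less_Suc_eq\<close>)
qed

lemma in_closure_Urev:
  fixes x :: "'k::{field,t2_space} list"
  assumes tf: "topological_field TYPE('k)" and x: "x \<in> Uang U \<alpha>"
    and V: "\<And>p. p < length x \<Longrightarrow> open (V p) \<and> x!p \<in> closure (V p)"
    and box: "{y. length y = length x \<and> (\<forall>p<length x. y!p \<in> V p)} \<subseteq> Uang U \<alpha>"
  shows "x \<in> ltop closure_of Urev U \<alpha>"
proof -
  have len: "length x = length \<alpha> + sum_list \<alpha>" using x by (simp add: Uang_def)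
  have "\<exists>y\<in>Urev U \<alpha>. y \<in> T" if T: "lopen T" "x \<in> T" for T
  proof -
    obtain A where A: "\<forall>p<length x. open (A p) \<and> x!p \<in> A p"
      "{y. length y = length x \<and> (\<forall>p<length x. y!p \<in> A p)} \<subseteq> T"
      using T unfolding lopen_def by blast
    have "infinite (A p \<inter> V p)" if p: "p < length x" for p
    proof (rule topological_field_open_infinite[OF tf])
      show "open (A p \<inter> V p)" using A(1) V p by auto
      have "x!p \<in> A p \<inter> closure (V p)" using A(1) V p by auto
      then show "A p \<inter> V p \<noteq> {}"
        using open_Int_closure_eq_empty[of "A p" "V p"] A(1) p by auto
    qed
    then obtain y where y: "length y = length x" "distinct y" "\<forall>p<length x. y!p \<in> A p \<inter> V p"
      using exists_distinct_list[of "length x" "\<lambda>p. A p \<inter> V p"] by auto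
    have "blk \<alpha> y l m \<noteq> blk \<alpha> y l m'"
      if l: "l < length \<alpha>" and m: "m \<le> \<alpha>!l" "m' \<le> \<alpha>!l" "m \<noteq> m'" for l m m'
    proof -
      have "blk_offset \<alpha> l + m < length y" "blk_offset \<alpha> l + m' < length y"
        using blk_offset_less[OF l m(1)] blk_offset_less[OF l m(2)] y(1) len by auto
      then show ?thesis unfolding blk_eq_nth using nth_eq_iff_index_eq[OF y(2)] m(3) by simp
    qed
    moreover have "y \<in> Uang U \<alpha>" using box y by auto
    ultimately have "y \<in> Urev U \<alpha>" by (simp add: Urev_def)
    moreover have "y \<in> T" using A(2) y by auto
    ultimately show ?thesis by blast
  qed
  then show ?thesis unfolding in_closure_of topspace_ltop openin_ltop by blast
qed

lemma Uang_subset_closure_Urev_open: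
  assumes tf: "topological_field TYPE('k::{field,t2_space})" and U: "lopen (U :: 'k list set)"
  shows "Uang U \<alpha> \<subseteq> ltop closure_of Urev U \<alpha>"
proof
  fix x assume x: "x \<in> Uang U \<alpha>"
  then obtain A where A: "\<forall>p<length x. open (A p) \<and> x!p \<in> A p"
    "{y. length y = length x \<and> (\<forall>p<length x. y!p \<in> A p)} \<subseteq> Uang U \<alpha>"
    using lopen_Uang[OF U] unfolding lopen_def by blast
  show "x \<in> ltop closure_of Urev U \<alpha>"
  proof (rule in_closure_Urev[OF tf x _ A(2)])
    fix p assume "p < length x"
    then show "open (A p) \<and> x!p \<in> closure (A p)" using A(1) closure_subset by blast
  qed
qed

lemma Uang_product:
  assumes U: "U = {x. length x = length \<alpha> \<and> (\<forall>i<length \<alpha>. x!i \<in> Us i)}"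
  shows "Uang U \<alpha> = {x. length x = length \<alpha> + sum_list \<alpha> \<and> (\<forall>p<length x. x!p \<in> Us (block_of \<alpha> p))}"
proof -
  have pt_in_U: "pt \<alpha> x \<iota> \<in> U \<longleftrightarrow> (\<forall>l<length \<alpha>. x ! (blk_offset \<alpha> l + \<iota>!l) \<in> Us l)" for x \<iota>
    by (simp add: U pt_def blk_eq_nth)
  have "(\<forall>\<iota>\<in>midx \<alpha>. pt \<alpha> x \<iota> \<in> U) \<longleftrightarrow> (\<forall>p<length x. x!p \<in> Us (block_of \<alpha> p))"
    if len: "length x = length \<alpha> + sum_list \<alpha>" for x
  proof
    assume all: "\<forall>\<iota>\<in>midx \<alpha>. pt \<alpha> x \<iota> \<in> U"
    show "\<forall>p<length x. x!p \<in> Us (block_of \<alpha> p)"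
    proof (intro allI impI)
      fix p assume "p < length x"
      then have l: "block_of \<alpha> p < length \<alpha>" and p: "blk_offset \<alpha> (block_of \<alpha> p) \<le> p"
        and m: "p - blk_offset \<alpha> (block_of \<alpha> p) \<le> \<alpha> ! block_of \<alpha> p"
        using block_of_less[of p \<alpha>] len by auto
      define \<iota> where "\<iota> = (replicate (length \<alpha>) 0)[block_of \<alpha> p := p - blk_offset \<alpha> (block_of \<alpha> p)]"
      have "\<iota> \<in> midx \<alpha>" unfolding \<iota>_def using m by (intro midx_update) (auto simp: midx_def)
      then show "x!p \<in> Us (block_of \<alpha> p)"
        using all pt_in_U l p by (fastforce simp: \<iota>_def)
    qed
  next
    assume all: "\<forall>p<length x. x!p \<in> Us (block_of \<alpha> p)"
    have "x ! (blk_offset \<alpha> l + \<iota>!l) \<in> Us l" if "\<iota> \<in> midx \<alpha>" and l: "l < length \<alpha>" for \<iota> l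
    proof -
      have m: "\<iota>!l \<le> \<alpha>!l" using that by (simp add: midx_def)
      have "blk_offset \<alpha> l + \<iota>!l < length x" using blk_offset_less[OF l m] len by simp
      then show ?thesis using all block_of_blk_offset[OF l m] by metis
    qed
    then show "\<forall>\<iota>\<in>midx \<alpha>. pt \<alpha> x \<iota> \<in> U" by (simp add: pt_in_U)
  qed
  then show ?thesis unfolding Uang_def by blast
qed

lemma Uang_subset_closure_Urev_product:
  assumes tf: "topological_field TYPE('k::{field,t2_space})"
    and Us: "\<forall>i<length \<alpha>. Us i \<subseteq> closure (interior (Us i))"
    and U: "U = {x :: 'k list. length x = length \<alpha> \<and> (\<forall>i<length \<alpha>. x!i \<in> Us i)}"
  shows "Uang U \<alpha> \<subseteq> ltop closure_of Urev U \<alpha>"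
proof
  fix x assume x: "x \<in> Uang U \<alpha>"
  show "x \<in> ltop closure_of Urev U \<alpha>"
  proof (rule in_closure_Urev[OF tf x])
    fix p assume p: "p < length x"
    then have "block_of \<alpha> p < length \<alpha>" using block_of_less[of p \<alpha>] x by (simp add: Uang_def)
    moreover have "x!p \<in> Us (block_of \<alpha> p)" using x p by (simp add: Uang_product[OF U])
    ultimately show
      "open (interior (Us (block_of \<alpha> p))) \<and> x!p \<in> closure (interior (Us (block_of \<alpha> p)))"
      using Us by blast
  next
    show "{y. length y = length x \<and> (\<forall>p<length x. y!p \<in> interior (Us (block_of \<alpha> p)))} \<subseteq> Uang U \<alpha>"
      using x interior_subset by (fastforce simp: Uang_product[OF U])
  qed
qed

lemma fang_eq_extension:
  fixes smul :: "'k::{field,t2_space} \<Rightarrow> 'f::{ab_group_add,t2_space} \<Rightarrow> 'f"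
  assumes h: "lcont (Uang U \<alpha>) h" "\<And>y. y \<in> Urev U \<alpha> \<Longrightarrow> h y = frev smul \<alpha> f y"
    and dense: "Uang U \<alpha> \<subseteq> ltop closure_of Urev U \<alpha>" and x: "x \<in> Uang U \<alpha>"
  shows "fang smul U \<alpha> f x = h x"
proof -
  define P where "P g \<longleftrightarrow> lcont (Uang U \<alpha>) g \<and> (\<forall>y\<in>Urev U \<alpha>. g y = frev smul \<alpha> f y)" for g
  have "P h" using h by (simp add: P_def)
  then have "P (fang smul U \<alpha> f)"
    unfolding fang_def P_def[symmetric] by (rule someI[where P = P])
  then have fang: "lcont (Uang U \<alpha>) (fang smul U \<alpha> f)"
    "\<And>y. y \<in> Urev U \<alpha> \<Longrightarrow> fang smul U \<alpha> f y = frev smul \<alpha> f y"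
    by (simp_all add: P_def)
  have Urev: "Uang U \<alpha> \<inter> Urev U \<alpha> = Urev U \<alpha>" by (auto simp: Urev_def)
  have "x \<in> subtopology ltop (Uang U \<alpha>) closure_of Urev U \<alpha>"
    unfolding closure_of_subtopology Urev using dense x by blast
  then show ?thesis
  proof (rule forall_in_closure_of_eq[OF _ Hausdorff_space_euclidean_t2])
    show "continuous_map (subtopology ltop (Uang U \<alpha>)) euclidean (fang smul U \<alpha> f)"
      using fang(1) by (simp add: lcont_def)
    show "continuous_map (subtopology ltop (Uang U \<alpha>)) euclidean h"
      using h(1) by (simp add: lcont_def)
    show "fang smul U \<alpha> f y = h y" if "y \<in> Urev U \<alpha>" for y
      using fang(2) h(2) that by simp
  qed
qed

lemma fang_eq_dj_divdiff_chart:
  fixes smul :: "'k::{field,t2_space} \<Rightarrow> 'f::{ab_group_add,t2_space} \<Rightarrow> 'f"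
  assumes tf: "topological_field TYPE('k)" and \<theta>: "divdiff_chart smul U \<alpha> \<theta>"
    and f: "Ck smul (sum_list \<alpha>) U f"
    and dense: "Uang U \<alpha> \<subseteq> ltop closure_of Urev U \<alpha>" and x: "x \<in> Uang U \<alpha>"
  shows "fang smul U \<alpha> f x = dj smul (sum_list \<alpha>) U f (\<theta> x)"
proof (rule fang_eq_extension[OF _ _ dense x])
  have aff: "affine_lmap (length \<alpha> + sum_list \<alpha>) (brdim (length \<alpha>) (sum_list \<alpha>)) \<theta>"
    and img: "\<theta> ` Uang U \<alpha> \<subseteq> brj (sum_list \<alpha>) U"
    using \<theta> by (auto simp: divdiff_chart_def)
  have "continuous_map (subtopology ltop (Uang U \<alpha>)) ltop \<theta>"
    by (rule continuous_map_affine_lmap[OF tf aff]) (auto simp: Uang_def)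
  then have \<theta>_cont:
    "continuous_map (subtopology ltop (Uang U \<alpha>)) (subtopology ltop (brj (sum_list \<alpha>) U)) \<theta>"
    using img by (auto simp: continuous_map_in_subtopology topspace_ltop)
  have "continuous_map (subtopology ltop (brj (sum_list \<alpha>) U)) euclidean (dj smul (sum_list \<alpha>) U f)"
    using Ck_imp_lcont[OF Ck_dj[of smul "sum_list \<alpha>" 0 U f]] f by (simp add: lcont_def)
  then show "lcont (Uang U \<alpha>) (\<lambda>y. dj smul (sum_list \<alpha>) U f (\<theta> y))"
    unfolding lcont_def using continuous_map_compose[OF \<theta>_cont] by (simp add: o_def)
  show "dj smul (sum_list \<alpha>) U f (\<theta> y) = frev smul \<alpha> f y" if "y \<in> Urev U \<alpha>" for y
    using \<theta> f that by (simp add: divdiff_chart_def)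
qed

lemma affine_divdiff_eq_dj_exists:
  fixes smul :: "'k::{field,t2_space} \<Rightarrow> 'f::{ab_group_add,t2_space} \<Rightarrow> 'f"
  assumes tf: "topological_field TYPE('k)" and vs: "vector_space smul"
    and d: "length \<alpha> = d" and k: "enat (sum_list \<alpha>) \<le> k"
    and dense: "Uang U \<alpha> \<subseteq> ltop closure_of Urev U \<alpha>"
  shows "\<exists>\<theta>. affine_lmap (d + sum_list \<alpha>) (brdim d (sum_list \<alpha>)) \<theta> \<and>
          \<theta> ` Uang U \<alpha> \<subseteq> brj (sum_list \<alpha>) U \<and>
          (\<forall>f. Ck_enat smul k U f \<longrightarrow>
               (\<forall>x\<in>Uang U \<alpha>. fang smul U \<alpha> f x = dj smul (sum_list \<alpha>) U f (\<theta> x)))"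
proof -
  obtain \<theta> where \<theta>: "divdiff_chart smul U \<alpha> \<theta>" using divdiff_chart_exists[OF vs] by blast
  have "fang smul U \<alpha> f x = dj smul (sum_list \<alpha>) U f (\<theta> x)"
    if "Ck_enat smul k U f" "x \<in> Uang U \<alpha>" for f x
    using fang_eq_dj_divdiff_chart[OF tf \<theta> Ck_enat_imp_Ck[OF _ k] dense] that by blast
  then show ?thesis using \<theta> d by (auto simp: divdiff_chart_def)
qed

theorem lemmaB4:
  fixes smul :: "'k::{field,t2_space} \<Rightarrow> 'f::{ab_group_add,t2_space} \<Rightarrow> 'f"
    and d :: nat and k :: enat and U :: "'k list set"
  assumes "topological_field TYPE('k)"
    and "topological_vector_space smul"
    and "0 < d"
    and "U \<subseteq> {x. length x = d}"
    and "openin ltop U \<or>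
         (\<exists>Us :: nat \<Rightarrow> 'k set. (\<forall>i<d. Us i \<subseteq> closure (interior (Us i))) \<and>
              U = {x. length x = d \<and> (\<forall>i<d. x!i \<in> Us i)})"
  shows "\<forall>\<alpha>. length \<alpha> = d \<and> enat (sum_list \<alpha>) \<le> k \<longrightarrow>
     (\<exists>\<theta>. affine_lmap (d + sum_list \<alpha>) (brdim d (sum_list \<alpha>)) \<theta> \<and>
          \<theta> ` Uang U \<alpha> \<subseteq> brj (sum_list \<alpha>) U \<and>
          (\<forall>f. Ck_enat smul k U f \<longrightarrow>
               (\<forall>x\<in>Uang U \<alpha>. fang smul U \<alpha> f x = dj smul (sum_list \<alpha>) U f (\<theta> x))))"
proof -
  have vs: "vector_space smul" using assms(2) by (simp add: topological_vector_space_def)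
  have dense: "Uang U \<alpha> \<subseteq> ltop closure_of Urev U \<alpha>" if "length \<alpha> = d" for \<alpha>
    using assms(5)
  proof
    assume "openin ltop U"
    then show ?thesis by (simp add: Uang_subset_closure_Urev_open[OF assms(1)] openin_ltop)
  next
    assume "\<exists>Us. (\<forall>i<d. Us i \<subseteq> closure (interior (Us i))) \<and>
      U = {x. length x = d \<and> (\<forall>i<d. x!i \<in> Us i)}"
    then show ?thesis using Uang_subset_closure_Urev_product[OF assms(1)] that by blast
  qed
  show ?thesis using affine_divdiff_eq_dj_exists[OF assms(1) vs _ _ dense] by blast
qed

end
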